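(* Let $\{X_t:t\in\mathbb{Z}\}$ be a real-valued WAP(1) time series such that (i) the set $\Lambda=\{\lambda\in[0,2\pi): M_t(EX_te^{-i\lambda t})\neq0\}$ is finite; (ii) there is a finite constant $K$ such that for all $n$ and all positive integers $b\le n$, $$\sup_{s=1,\dots,n-b+1}E\Big(\frac1{\sqrt b}\sum_{t=s}^{s+b-1}(X_t-EX_t)\Big)^4<K.$$ Then there is a finite constant $K'$ such that for all $n$ and all $b\le n$, $$\sup_{s=1,\dots,n-b+1}E\Big(\frac1{\sqrt b}\sum_{t=s}^{s+b-1}(X_t-\mu)\Big)^4<K',$$ where $\mu=M_t(EX_t)$.
   Context: A real or complex function $f$ on $\mathbb{Z}$ is almost periodic if for every $\epsilon>0$ there is $l_\epsilon$ such that every interval of length greater than $l_\epsilon$ contains some $p_\epsilon$ with $\sup_{t\in\mathbb{Z}}|f(t+p_\epsilon)-f(t)|<\epsilon$. For such $f$, $M_t(f(t))=\lim_{n\to\infty}\frac1n\sum_{j=s}^{s+n-1}f(j)$ exists uniformly in $s$. A time series is WAP(1) if $E|X_t|<\infty$ for all $t$ and $t\mapsto EX_t$ is almost periodic. *)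

theory Defs
  imports "HOL-Probability.Probability"
begin

definition almost_periodic :: "(int \<Rightarrow> 'b::real_normed_vector) \<Rightarrow> bool" where
  "almost_periodic f \<longleftrightarrow>
     (\<forall>\<epsilon>>0. \<exists>l. \<forall>a::int. \<forall>L::int. L > l \<longrightarrow>
        (\<exists>p\<in>{a..a+L}. \<exists>\<delta><\<epsilon>. \<forall>t. norm (f (t + p) - f t) \<le> \<delta>))"

text \<open>Mean M_t(f(t)) = lim_n (1/n) sum_{j=s}^{s+n-1} f(j); for almost periodic f it exists
  uniformly in s, so we take s = 0.\<close>
definition ap_mean :: "(int \<Rightarrow> 'b::real_normed_vector) \<Rightarrow> 'b" where
  "ap_mean f = lim (\<lambda>n::nat. (\<Sum>j<n. f (int j)) /\<^sub>R real n)"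

definition WAP1 :: "'a measure \<Rightarrow> (int \<Rightarrow> 'a \<Rightarrow> real) \<Rightarrow> bool" where
  "WAP1 M X \<longleftrightarrow> (\<forall>t. integrable M (X t)) \<and>
     almost_periodic (\<lambda>t. integral\<^sup>L M (X t))"

end

theory Submission
  imports Defs
begin

(* Writing m t = E X_t, the block sum of X_t - mu splits into the block sum of X_t - m t,
   controlled by hypothesis (ii), plus the deterministic sum of m t - mu over the block.
   The heart of the matter is that the latter is bounded uniformly in the block: by the
   uniqueness theorem for almost periodic functions, an almost periodic m whose Fourier
   coefficients vanish outside a finite set Lambda equals the trigonometric polynomial
   sum_{lam in Lambda} a(lam) e^{i lam t}, and every nonconstant exponential has bounded
   partial sums (geometric series), while the constant term is exactly mu. *)

(* This is Bochner's characterisation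
   of almost periodicity; all that is needed below is that almost periodic functions have it. *)
definition trans_precompact :: "(int \<Rightarrow> 'b::real_normed_vector) \<Rightarrow> bool" where
  "trans_precompact f \<longleftrightarrow>
     (\<forall>e>0. \<exists>R. finite R \<and> (\<forall>a. \<exists>r\<in>R. \<forall>t. norm (f (t + a) - f (t + r)) \<le> e))"

lemma norm_diff_triangle: "norm ((x::'b::real_normed_vector) - y) \<le> norm (x - z) + norm (y - z)"
  using norm_triangle_ineq4[of "x - z" "y - z"] by simp

lemma finite_representatives:
  assumes "finite K" "\<And>a::int. \<exists>x\<in>K. P x a"
  shows "\<exists>R. finite R \<and> (\<forall>a. \<exists>r\<in>R. \<exists>x\<in>K. P x a \<and> P x r)"
proof -
  define R where "R = (\<lambda>x. SOME a. P x a) ` {x\<in>K. \<exists>a. P x a}"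
  have "finite R" using assms(1) by (simp add: R_def)
  moreover have "\<exists>r\<in>R. \<exists>x\<in>K. P x a \<and> P x r" for a
  proof -
    obtain x where x: "x \<in> K" "P x a" using assms(2) by blast
    have "P x (SOME a. P x a)" using x by (metis someI_ex)
    thus ?thesis using x unfolding R_def by blast
  qed
  ultimately show ?thesis by blast
qed

(* An e-almost period p in the window [a - L, a] turns the shift a into the shift a - p in [0, L]. *)
lemma almost_periodic_imp_trans_precompact:
  assumes "almost_periodic f"
  shows "trans_precompact f"
  unfolding trans_precompact_def
proof (intro allI impI)
  fix e :: real assume e: "e > 0"
  obtain l where l: "\<forall>a::int. \<forall>L::int. L > l \<longrightarrow>
        (\<exists>p\<in>{a..a+L}. \<exists>\<delta><e. \<forall>t. norm (f (t + p) - f t) \<le> \<delta>)"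
    using assms e unfolding almost_periodic_def by blast
  define L where "L = max l 0 + 1"
  have "L > l" by (simp add: L_def)
  have "\<exists>r\<in>{0..L}. \<forall>t. norm (f (t + a) - f (t + r)) \<le> e" for a
  proof -
    obtain p \<delta> where p: "p \<in> {a-L..a-L+L}" "\<delta> < e" "\<forall>t. norm (f (t + p) - f t) \<le> \<delta>"
      using l \<open>L > l\<close> by blast
    have "norm (f (t + a) - f (t + (a - p))) \<le> e" for t
      using p(3)[rule_format, of "t + (a - p)"] p(2) by (simp add: algebra_simps)
    moreover have "a - p \<in> {0..L}" using p(1) by auto
    ultimately show ?thesis by blast
  qed
  thus "\<exists>R. finite R \<and> (\<forall>a. \<exists>r\<in>R. \<forall>t. norm (f (t + a) - f (t + r)) \<le> e)"
    by (intro exI[of _ "{0..L}"]) auto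
qed

lemma trans_precompact_bounded:
  assumes "trans_precompact f" shows "\<exists>B>0. \<forall>t. norm (f t) \<le> B"
proof -
  obtain R where R: "finite R" "\<forall>a. \<exists>r\<in>R. \<forall>t. norm (f (t + a) - f (t + r)) \<le> 1"
    using assms unfolding trans_precompact_def by (meson zero_less_one)
  define B0 where "B0 = Max (insert 0 ((\<lambda>r. norm (f r)) ` R))"
  have B0: "0 \<le> B0" "\<And>r. r \<in> R \<Longrightarrow> norm (f r) \<le> B0"
    unfolding B0_def using R(1) by (auto intro: Max_ge)
  have "norm (f a) \<le> 1 + B0" for a
  proof -
    obtain r where r: "r \<in> R" "norm (f (0 + a) - f (0 + r)) \<le> 1" using R(2) by blast
    have "norm (f a) \<le> norm (f r) + norm (f a - f r)"
      by (metis norm_triangle_sub add.commute)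
    thus ?thesis using r B0(2)[OF r(1)] by simp
  qed
  thus ?thesis using B0(1) by (intro exI[of _ "1 + B0"]) auto
qed

lemma trans_precompact_joint:
  assumes "trans_precompact f" "trans_precompact g" "e > 0"
  shows "\<exists>R. finite R \<and> (\<forall>a. \<exists>r\<in>R. \<forall>t. norm (f (t + a) - f (t + r)) \<le> e \<and> norm (g (t + a) - g (t + r)) \<le> e)"
proof -
  obtain R1 where R1: "finite R1" "\<forall>a. \<exists>r\<in>R1. \<forall>t. norm (f (t + a) - f (t + r)) \<le> e/2"
    using assms(1,3) unfolding trans_precompact_def by (meson half_gt_zero)
  obtain R2 where R2: "finite R2" "\<forall>a. \<exists>r\<in>R2. \<forall>t. norm (g (t + a) - g (t + r)) \<le> e/2"
    using assms(2,3) unfolding trans_precompact_def by (meson half_gt_zero)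
  define P where "P = (\<lambda>(r1,r2) a. (\<forall>t. norm (f (t + a) - f (t + r1)) \<le> e/2) \<and> (\<forall>t. norm (g (t + a) - g (t + r2)) \<le> e/2))"
  have "\<exists>x\<in>R1 \<times> R2. P x a" for a
    using R1(2) R2(2) unfolding P_def by fast
  then obtain R where R: "finite R" "\<forall>a. \<exists>r\<in>R. \<exists>x\<in>R1\<times>R2. P x a \<and> P x r"
    using finite_representatives[of "R1 \<times> R2" P] R1(1) R2(1) by auto
  have "\<exists>r\<in>R. \<forall>t. norm (f (t + a) - f (t + r)) \<le> e \<and> norm (g (t + a) - g (t + r)) \<le> e" for a
  proof -
    obtain r r1 r2 where r: "r \<in> R" "(r1,r2) \<in> R1\<times>R2" "P (r1,r2) a" "P (r1,r2) r"
      using R(2) by blast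
    have "norm (f (t + a) - f (t + r)) \<le> e \<and> norm (g (t + a) - g (t + r)) \<le> e" for t
      using r(3,4) norm_diff_triangle[of "f (t + a)" "f (t + r)" "f (t + r1)"]
        norm_diff_triangle[of "g (t + a)" "g (t + r)" "g (t + r2)"]
      unfolding P_def by (simp add: field_simps) (smt (verit))
    thus ?thesis using r(1) by blast
  qed
  thus ?thesis using R(1) by blast
qed

lemma trans_precompact_lipschitz2:
  assumes "trans_precompact f" "trans_precompact g" "C > 0"
    and "\<And>x y. norm (h x - h y) \<le> C * (norm (f x - f y) + norm (g x - g y))"
  shows "trans_precompact h"
  unfolding trans_precompact_def
proof (intro allI impI)
  fix e :: real assume e: "e > 0"
  define d where "d = e / (2 * C)"
  have d: "d > 0" using e assms(3) by (simp add: d_def)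
  have Cd: "C * (d + d) = e" using assms(3) by (simp add: d_def)
  obtain R where R: "finite R" "\<forall>a. \<exists>r\<in>R. \<forall>t. norm (f (t + a) - f (t + r)) \<le> d \<and> norm (g (t + a) - g (t + r)) \<le> d"
    using trans_precompact_joint[OF assms(1,2) d] by auto
  have "\<exists>r\<in>R. \<forall>t. norm (h (t + a) - h (t + r)) \<le> e" for a
  proof -
    obtain r where r: "r \<in> R" "\<forall>t. norm (f (t + a) - f (t + r)) \<le> d \<and> norm (g (t + a) - g (t + r)) \<le> d"
      using R(2) by blast
    have "norm (h (t + a) - h (t + r)) \<le> e" for t
    proof -
      have "norm (h (t + a) - h (t + r)) \<le> C * (norm (f (t + a) - f (t + r)) + norm (g (t + a) - g (t + r)))"
        by (rule assms(4))
      also have "\<dots> \<le> C * (d + d)"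
        using r(2)[rule_format, of t] assms(3) by (intro mult_left_mono add_mono) auto
      finally show ?thesis using Cd by simp
    qed
    thus ?thesis using r(1) by blast
  qed
  thus "\<exists>R. finite R \<and> (\<forall>a. \<exists>r\<in>R. \<forall>t. norm (h (t + a) - h (t + r)) \<le> e)" using R(1) by blast
qed

lemma trans_precompact_map:
  assumes "trans_precompact f" "\<And>x y. norm (g x - g y) \<le> norm (f x - f y)"
  shows "trans_precompact g"
proof (rule trans_precompact_lipschitz2[OF assms(1) assms(1), of 1])
  show "norm (g x - g y) \<le> 1 * (norm (f x - f y) + norm (f x - f y))" for x y
    using assms(2)[of x y] by (simp add: order_trans)
qed simp

lemma trans_precompact_const: "trans_precompact (\<lambda>t. c)"
  unfolding trans_precompact_def by (intro allI impI exI[of _ "{0}"]) auto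

lemma trans_precompact_shift:
  assumes "trans_precompact f" shows "trans_precompact (\<lambda>t. f (t + u))"
  unfolding trans_precompact_def
proof (intro allI impI)
  fix e :: real assume "e > 0"
  then obtain R where R: "finite R" "\<forall>a. \<exists>r\<in>R. \<forall>t. norm (f (t + a) - f (t + r)) \<le> e"
    using assms unfolding trans_precompact_def by blast
  have "\<exists>r\<in>R. \<forall>t. norm (f (t + a + u) - f (t + r + u)) \<le> e" for a
  proof -
    obtain r where r: "r \<in> R" "\<forall>t. norm (f (t + a) - f (t + r)) \<le> e" using R(2) by blast
    have "norm (f (t + a + u) - f (t + r + u)) \<le> e" for t
      using r(2)[rule_format, of "t + u"] by (simp add: ac_simps)
    thus ?thesis using r(1) by blast
  qed
  thus "\<exists>R. finite R \<and> (\<forall>a. \<exists>r\<in>R. \<forall>t. norm (f (t + a + u) - f (t + r + u)) \<le> e)" using R(1) by blast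
qed

lemma trans_precompact_add:
  assumes "trans_precompact f" "trans_precompact g" shows "trans_precompact (\<lambda>t. f t + g t)"
  by (rule trans_precompact_lipschitz2[OF assms, of 1])
     (simp_all add: add_diff_add norm_triangle_ineq)

lemma trans_precompact_diff:
  assumes "trans_precompact f" "trans_precompact g" shows "trans_precompact (\<lambda>t. f t - g t)"
proof (rule trans_precompact_lipschitz2[OF assms, of 1])
  show "norm ((f x - g x) - (f y - g y)) \<le> 1 * (norm (f x - f y) + norm (g x - g y))" for x y
    using norm_triangle_ineq4[of "f x - f y" "g x - g y"] by (simp add: algebra_simps)
qed simp

lemma trans_precompact_mult:
  fixes f g :: "int \<Rightarrow> 'b::real_normed_algebra"
  assumes "trans_precompact f" "trans_precompact g" shows "trans_precompact (\<lambda>t. f t * g t)"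
proof -
  obtain Bf where Bf: "Bf > 0" "\<forall>t. norm (f t) \<le> Bf" using trans_precompact_bounded[OF assms(1)] by blast
  obtain Bg where Bg: "Bg > 0" "\<forall>t. norm (g t) \<le> Bg" using trans_precompact_bounded[OF assms(2)] by blast
  have "norm (f x * g x - f y * g y) \<le> (Bf + Bg) * (norm (f x - f y) + norm (g x - g y))" for x y
  proof -
    have eq: "f x * g x - f y * g y = (f x - f y) * g x + f y * (g x - g y)"
      by (simp add: algebra_simps)
    have "norm (f x * g x - f y * g y) \<le> norm (f x - f y) * norm (g x) + norm (f y) * norm (g x - g y)"
      unfolding eq
      using norm_triangle_ineq[of "(f x - f y) * g x" "f y * (g x - g y)"]
        norm_mult_ineq[of "f x - f y" "g x"] norm_mult_ineq[of "f y" "g x - g y"] by linarith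
    also have "\<dots> \<le> norm (f x - f y) * (Bf + Bg) + (Bf + Bg) * norm (g x - g y)"
      using Bf Bg by (intro add_mono mult_mono) (auto intro: add_increasing add_increasing2)
    finally show ?thesis by (simp add: algebra_simps)
  qed
  thus ?thesis by (intro trans_precompact_lipschitz2[OF assms, of "Bf + Bg"]) (use Bf Bg in auto)
qed

lemma trans_precompact_cnj: "trans_precompact f \<Longrightarrow> trans_precompact (\<lambda>t. cnj (f t))"
  by (erule trans_precompact_map) (simp flip: complex_cnj_diff)

lemma trans_precompact_of_real:
  "trans_precompact (f :: int \<Rightarrow> real) \<Longrightarrow> trans_precompact (\<lambda>t. complex_of_real (f t))"
  by (erule trans_precompact_map) (simp flip: of_real_diff)

lemma trans_precompact_sum:
  assumes "finite A" "\<And>x. x \<in> A \<Longrightarrow> trans_precompact (F x)"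
  shows "trans_precompact (\<lambda>t. \<Sum>x\<in>A. F x t)"
  using assms by (induction A rule: finite_induct) (auto intro: trans_precompact_add trans_precompact_const)

(* Shifting a character multiplies it by the unimodular constant cis (c a), so a finite e/2-net
   of the unit circle yields the required finite set of shifts. *)
lemma trans_precompact_cis: "trans_precompact (\<lambda>t. cis (c * real_of_int t))"
  unfolding trans_precompact_def
proof (intro allI impI)
  fix e :: real assume e: "e > 0"
  have "compact (sphere (0::complex) 1)" by simp
  then obtain k where k: "finite k" "sphere (0::complex) 1 \<subseteq> (\<Union>x\<in>k. ball x (e/2))"
    using e unfolding compact_eq_totally_bounded by (meson half_gt_zero)
  define P where "P = (\<lambda>x a. cis (c * real_of_int a) \<in> ball x (e/2))"
  have "\<exists>x\<in>k. P x a" for a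
  proof -
    have "cis (c * real_of_int a) \<in> sphere 0 1" by simp
    thus ?thesis using k(2) unfolding P_def by blast
  qed
  then obtain R where R: "finite R" "\<forall>a. \<exists>r\<in>R. \<exists>x\<in>k. P x a \<and> P x r"
    using finite_representatives[OF k(1), of P] by blast
  have "\<exists>r\<in>R. \<forall>t. norm (cis (c * real_of_int (t + a)) - cis (c * real_of_int (t + r))) \<le> e" for a
  proof -
    obtain r x where rx: "r \<in> R" "P x a" "P x r" using R(2) by blast
    have d: "dist (cis (c * real_of_int a)) (cis (c * real_of_int r)) < e"
      using rx(2,3) dist_triangle[of "cis (c * real_of_int a)" "cis (c * real_of_int r)" x]
      unfolding P_def mem_ball by (simp add: dist_commute)
    have "cis (c * real_of_int (t + a)) - cis (c * real_of_int (t + r))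
            = cis (c * real_of_int t) * (cis (c * real_of_int a) - cis (c * real_of_int r))" for t
      by (simp add: distrib_left cis_mult right_diff_distrib)
    hence "norm (cis (c * real_of_int (t + a)) - cis (c * real_of_int (t + r)))
            = dist (cis (c * real_of_int a)) (cis (c * real_of_int r))" for t
      by (simp add: norm_mult dist_norm)
    thus ?thesis using rx(1) d by (intro bexI[of _ r]) (auto simp del: of_int_add)
  qed
  thus "\<exists>R. finite R \<and> (\<forall>a. \<exists>r\<in>R. \<forall>t. norm (cis (c * real_of_int (t + a)) - cis (c * real_of_int (t + r))) \<le> e)"
    using R(1) by blast
qed

definition window_avg :: "(int \<Rightarrow> 'b::real_normed_vector) \<Rightarrow> nat \<Rightarrow> int \<Rightarrow> 'b" where
  "window_avg f n s = (\<Sum>j<n. f (s + int j)) /\<^sub>R real n"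

lemma window_avg_complex: "window_avg (f :: int \<Rightarrow> complex) n s = (\<Sum>j<n. f (s + int j)) / of_nat n"
  unfolding window_avg_def by (simp add: scaleR_conv_of_real divide_inverse mult.commute)

lemma ap_mean_eqI:
  assumes "(\<lambda>n. window_avg f n 0) \<longlonglongrightarrow> a"
  shows "ap_mean f = a"
  using assms unfolding ap_mean_def window_avg_def by (simp add: limI)

lemma sum_lessThan_add_split:
  fixes a b :: nat shows "(\<Sum>j<a+b. F j) = (\<Sum>j<a. F j) + (\<Sum>j<b. F (a + j))"
  by (induction b) (simp_all add: add.assoc)

lemma sum_atLeastLessThan_shift: "(\<Sum>j\<in>{m..<m+n}. F j) = (\<Sum>j<n. F (m + j))" for m n :: nat
  by (induction n) simp_all

lemma norm_sum_le_card:
  assumes "\<And>j. j < d \<Longrightarrow> norm (F j) \<le> B"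
  shows "norm (\<Sum>j<d. F j) \<le> real d * B"
proof -
  have "norm (\<Sum>j<d. F j) \<le> (\<Sum>j<d. B)" by (rule sum_norm_le) (use assms in auto)
  thus ?thesis by simp
qed

lemma window_avg_norm_le:
  assumes "\<And>t. norm (f t) \<le> c"
  shows "norm (window_avg f n s) \<le> c"
proof (cases "n = 0")
  case True
  have "0 \<le> c" using assms[of 0] norm_ge_zero order_trans by blast
  thus ?thesis using True by (simp add: window_avg_def)
next
  case False
  have "norm (\<Sum>j<n. f (s + int j)) \<le> real n * c" by (rule norm_sum_le_card) (use assms in auto)
  moreover have "norm (window_avg f n s) = norm (\<Sum>j<n. f (s + int j)) / real n"
    by (simp add: window_avg_def divide_inverse mult.commute)
  ultimately show ?thesis using False by (simp add: divide_le_eq mult.commute)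
qed

lemma window_avg_lincomb:
  "window_avg (\<lambda>t. \<Sum>x\<in>A. c x * F x t) n s = (\<Sum>x\<in>A. c x * window_avg (F x) n s)"
  for F :: "'i \<Rightarrow> int \<Rightarrow> complex"
  unfolding window_avg_complex
  by (simp add: sum_distrib_left sum_divide_distrib[symmetric] sum.swap[of _ A] mult.assoc)

lemma window_avg_diff: "window_avg (\<lambda>t. f t - h t) n s = window_avg f n s - window_avg h n s" for f h :: "int \<Rightarrow> complex"
  unfolding window_avg_complex by (simp add: sum_subtractf diff_divide_distrib)

(* Moving a window by d changes its sum by at most 2 |d| sup |f|: only the ends differ. *)
lemma window_sum_shift_nat:
  fixes f :: "int \<Rightarrow> 'b::real_normed_vector"
  assumes "\<forall>t. norm (f t) \<le> B"
  shows "norm ((\<Sum>j<n. f (x + int d + int j)) - (\<Sum>j<n. f (x + int j))) \<le> 2 * real d * B"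
proof -
  have S1: "(\<Sum>j<n+d. f (x + int j)) = (\<Sum>j<n. f (x + int j)) + (\<Sum>j<d. f (x + int (n + j)))"
    by (rule sum_lessThan_add_split)
  have S2: "(\<Sum>j<d+n. f (x + int j)) = (\<Sum>j<d. f (x + int j)) + (\<Sum>j<n. f (x + int d + int j))"
    by (simp add: sum_lessThan_add_split add.assoc)
  have "(\<Sum>j<n. f (x + int d + int j)) - (\<Sum>j<n. f (x + int j))
      = (\<Sum>j<d. f (x + int (n + j))) - (\<Sum>j<d. f (x + int j))"
    using S1 S2 by (simp add: add.commute algebra_simps)
  also have "norm \<dots> \<le> norm (\<Sum>j<d. f (x + int (n + j))) + norm (\<Sum>j<d. f (x + int j))"
    by (rule norm_triangle_ineq4)
  also have "\<dots> \<le> real d * B + real d * B"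
    using assms by (intro add_mono norm_sum_le_card) auto
  finally show ?thesis by (simp add: algebra_simps)
qed

lemma window_sum_shift:
  fixes f :: "int \<Rightarrow> 'b::real_normed_vector"
  assumes "\<forall>t. norm (f t) \<le> B"
  shows "norm ((\<Sum>j<n. f (y + int j)) - (\<Sum>j<n. f (x + int j))) \<le> 2 * \<bar>real_of_int (y - x)\<bar> * B"
proof (cases "x \<le> y")
  case True
  have y: "y = x + int (nat (y - x))" using True by simp
  show ?thesis using window_sum_shift_nat[OF assms, where n=n and x=x and d="nat (y - x)"] True
    by (subst (1) y) simp
next
  case False
  have x: "x = y + int (nat (x - y))" using False by simp
  show ?thesis using window_sum_shift_nat[OF assms, where n=n and x=y and d="nat (x - y)"] False
    by (subst (2) x) (simp add: norm_minus_commute)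
qed

(* Long windows have nearly equal averages wherever they start: approximate the start s by a
   representative shift r from a finite e/4-net, and compare the finitely many representatives
   with the previous lemma. *)
lemma window_avg_oscillation:
  fixes f :: "int \<Rightarrow> 'b::real_normed_vector"
  assumes "trans_precompact f" "e > 0"
  shows "\<exists>N\<ge>1. \<forall>n\<ge>N. \<forall>s s'. norm (window_avg f n s - window_avg f n s') \<le> e"
proof -
  obtain B where B: "B > 0" "\<forall>t. norm (f t) \<le> B" using trans_precompact_bounded[OF assms(1)] by blast
  obtain R where R: "finite R" "\<forall>a. \<exists>r\<in>R. \<forall>t. norm (f (t + a) - f (t + r)) \<le> e/4"
    using assms unfolding trans_precompact_def by (meson divide_pos_pos zero_less_numeral)
  define D where "D = Max (insert 0 ((\<lambda>r. \<bar>r\<bar>) ` R))"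
  have D: "\<bar>r\<bar> \<le> D" if "r \<in> R" for r
    unfolding D_def using R(1) that by (intro Max_ge) auto
  define N where "N = nat \<lceil>8 * real_of_int D * B / e\<rceil> + 1"
  have N1: "N \<ge> 1" by (simp add: N_def)
  let ?S = "\<lambda>n x. (\<Sum>j<n. f (x + int j))"
  have approx: "\<exists>r\<in>R. norm (?S n s - ?S n r) \<le> real n * (e/4)" for n s
  proof -
    obtain r where r: "r \<in> R" "\<forall>t. norm (f (t + s) - f (t + r)) \<le> e/4" using R(2) by blast
    have "norm (?S n s - ?S n r) = norm (\<Sum>j<n. f (s + int j) - f (r + int j))"
      by (simp add: sum_subtractf)
    also have "\<dots> \<le> real n * (e/4)"
    proof (rule norm_sum_le_card)
      show "norm (f (s + int j) - f (r + int j)) \<le> e/4" for j :: nat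
        using r(2)[rule_format, of "int j"] by (simp add: add.commute)
    qed
    finally show ?thesis using r(1) by blast
  qed
  have "norm (window_avg f n s - window_avg f n s') \<le> e" if n: "n \<ge> N" for n s s'
  proof -
    obtain r where r: "r \<in> R" "norm (?S n s - ?S n r) \<le> real n * (e/4)"
      using approx by blast
    obtain r' where r': "r' \<in> R" "norm (?S n s' - ?S n r') \<le> real n * (e/4)"
      using approx by blast
    have "\<bar>real_of_int (r - r')\<bar> \<le> 2 * real_of_int D" using D[OF r(1)] D[OF r'(1)] by linarith
    hence rr': "norm (?S n r - ?S n r') \<le> 4 * real_of_int D * B"
      using window_sum_shift[OF B(2), where n=n and y=r and x=r'] B(1) by (smt (verit) mult_right_mono)
    have "norm (?S n s - ?S n s') \<le> norm (?S n s - ?S n r) + norm (?S n r - ?S n r') + norm (?S n s' - ?S n r')"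
      using norm_diff_triangle[of "?S n s" "?S n s'" "?S n r"]
        norm_diff_triangle[of "?S n s'" "?S n r" "?S n r'"] by linarith
    also have "\<dots> \<le> real n * (e/2) + 4 * real_of_int D * B"
      using r(2) rr' r'(2) by linarith
    also have "\<dots> \<le> real n * e"
    proof -
      have "8 * real_of_int D * B / e \<le> real n" using n unfolding N_def by linarith
      thus ?thesis using assms(2) by (simp add: divide_le_eq)
    qed
    finally have "norm (?S n s - ?S n s') \<le> real n * e" .
    moreover have "norm (window_avg f n s - window_avg f n s') = norm (?S n s - ?S n s') / real n"
      unfolding window_avg_def by (simp flip: scaleR_diff_right add: divide_inverse mult.commute)
    moreover have "real n > 0" using n N1 by simp
    ultimately show ?thesis by (simp add: divide_le_eq mult.commute)
  qed
  thus ?thesis using N1 by blast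
qed

lemma window_avg_concat:
  fixes f :: "int \<Rightarrow> 'b::real_normed_vector"
  assumes "k > 0" "n > 0"
  shows "window_avg f (k * n) s = (\<Sum>i<k. window_avg f n (s + int (i * n))) /\<^sub>R real k"
proof -
  have "(\<Sum>j<k * n. f (s + int j)) = (\<Sum>i<k. \<Sum>j\<in>{i * n..<i * n + n}. f (s + int j))"
    by (rule sum.nat_group[symmetric])
  also have "\<dots> = (\<Sum>i<k. \<Sum>j<n. f (s + int (i * n) + int j))"
    by (simp add: sum_atLeastLessThan_shift add.assoc)
  finally have eq: "(\<Sum>j<k * n. f (s + int j)) = (\<Sum>i<k. \<Sum>j<n. f (s + int (i * n) + int j))" .
  have "(\<Sum>i<k. window_avg f n (s + int (i * n))) /\<^sub>R real k
     = (inverse (real k) * inverse (real n)) *\<^sub>R (\<Sum>i<k. \<Sum>j<n. f (s + int (i * n) + int j))"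
    unfolding window_avg_def by (simp add: scaleR_sum_right)
  also have "\<dots> = window_avg f (k * n) s"
    unfolding window_avg_def eq by (simp add: mult.commute)
  finally show ?thesis by simp
qed

lemma window_avg_concat_close:
  fixes f :: "int \<Rightarrow> 'b::real_normed_vector"
  assumes osc: "\<forall>s s'. norm (window_avg f n s - window_avg f n s') \<le> e" and "k > 0" "n > 0"
  shows "norm (window_avg f (k * n) s - window_avg f n s) \<le> e"
proof -
  have c: "(\<Sum>i<k. window_avg f n s) /\<^sub>R real k = window_avg f n s"
    using assms(2) by (simp add: sum_constant_scaleR)
  have "window_avg f (k * n) s - window_avg f n s
      = (\<Sum>i<k. window_avg f n (s + int (i * n)) - window_avg f n s) /\<^sub>R real k"
    unfolding sum_subtractf scaleR_diff_right c by (simp add: window_avg_concat[OF assms(2,3)])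
  also have "norm \<dots> = norm (\<Sum>i<k. window_avg f n (s + int (i * n)) - window_avg f n s) / real k"
    by (simp add: divide_inverse mult.commute)
  also have "\<dots> \<le> (real k * e) / real k"
    by (intro divide_right_mono norm_sum_le_card) (use osc in auto)
  also have "\<dots> = e" using assms(2) by simp
  finally show ?thesis .
qed

(* Uniform Cauchy property: compare windows of lengths m and n through the common length m n. *)
lemma window_avg_Cauchy:
  fixes f :: "int \<Rightarrow> 'b::real_normed_vector"
  assumes "trans_precompact f" "e > 0"
  shows "\<exists>N. \<forall>m\<ge>N. \<forall>n\<ge>N. \<forall>s. norm (window_avg f m s - window_avg f n s) \<le> e"
proof -
  obtain N where N: "N \<ge> 1" "\<forall>n\<ge>N. \<forall>s s'. norm (window_avg f n s - window_avg f n s') \<le> e/2"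
    using window_avg_oscillation[OF assms(1), of "e/2"] assms(2) by auto
  have "norm (window_avg f m s - window_avg f n s) \<le> e" if "m \<ge> N" "n \<ge> N" for m n s
  proof -
    have "norm (window_avg f (n * m) s - window_avg f m s) \<le> e/2"
      using N that by (intro window_avg_concat_close) auto
    moreover have "norm (window_avg f (m * n) s - window_avg f n s) \<le> e/2"
      using N that by (intro window_avg_concat_close) auto
    ultimately show ?thesis
      using norm_diff_triangle[of "window_avg f m s" "window_avg f n s" "window_avg f (m * n) s"]
      by (simp add: mult.commute norm_minus_commute)
  qed
  thus ?thesis by blast
qed

lemma LIMSEQ_I_le:
  assumes "\<And>e. e > 0 \<Longrightarrow> \<exists>N. \<forall>n\<ge>N. norm (X n - a) \<le> e"
  shows "X \<longlonglongrightarrow> a"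
proof (rule LIMSEQ_I)
  fix r :: real assume "r > 0"
  then obtain N where N: "\<forall>n\<ge>N. norm (X n - a) \<le> r/2" using assms half_gt_zero by blast
  show "\<exists>N. \<forall>n\<ge>N. norm (X n - a) < r"
    using N \<open>r > 0\<close> by (intro exI[of _ N]) force
qed

lemma ap_mean_uniform:
  fixes f :: "int \<Rightarrow> 'b::banach"
  assumes "trans_precompact f" "e > 0"
  shows "\<exists>N. \<forall>n\<ge>N. \<forall>s. norm (window_avg f n s - ap_mean f) \<le> e"
proof -
  have "Cauchy (\<lambda>n. window_avg f n 0)"
  proof (rule CauchyI)
    fix e :: real assume "e > 0"
    then obtain N where N: "\<forall>m\<ge>N. \<forall>n\<ge>N. \<forall>s. norm (window_avg f m s - window_avg f n s) \<le> e/2"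
      using window_avg_Cauchy[OF assms(1), of "e/2"] by auto
    show "\<exists>M. \<forall>m\<ge>M. \<forall>n\<ge>M. norm (window_avg f m 0 - window_avg f n 0) < e"
    proof (intro exI[of _ N] allI impI)
      fix m n assume "N \<le> m" "N \<le> n"
      thus "norm (window_avg f m 0 - window_avg f n 0) < e" using N \<open>e > 0\<close>
        by (smt (verit) field_sum_of_halves)
    qed
  qed
  then obtain a where a: "(\<lambda>n. window_avg f n 0) \<longlonglongrightarrow> a"
    unfolding Cauchy_convergent_iff convergent_def by blast
  obtain N1 where N1: "\<forall>m\<ge>N1. \<forall>n\<ge>N1. \<forall>s. norm (window_avg f m s - window_avg f n s) \<le> e/2"
    using window_avg_Cauchy[OF assms(1), of "e/2"] assms(2) by auto
  obtain N2 where N2: "\<forall>n\<ge>N2. \<forall>s s'. norm (window_avg f n s - window_avg f n s') \<le> e/2"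
    using window_avg_oscillation[OF assms(1), of "e/2"] assms(2) by auto
  have "norm (window_avg f n s - a) \<le> e" if n: "n \<ge> max N1 N2" for n s
  proof (rule Lim_norm_ubound[OF _ tendsto_diff[OF tendsto_const a]])
    show "\<forall>\<^sub>F m in sequentially. norm (window_avg f n s - window_avg f m 0) \<le> e"
      unfolding eventually_sequentially
    proof (intro exI[of _ "max N1 N2"] allI impI)
      fix m assume "m \<ge> max N1 N2"
      hence "norm (window_avg f n 0 - window_avg f m 0) \<le> e/2" using N1 n by simp
      moreover have "norm (window_avg f n s - window_avg f n 0) \<le> e/2" using N2 n by simp
      ultimately show "norm (window_avg f n s - window_avg f m 0) \<le> e"
        using norm_diff_triangle[of "window_avg f n s" "window_avg f m 0" "window_avg f n 0"]
        by (simp add: norm_minus_commute)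
    qed
  qed simp
  thus ?thesis using ap_mean_eqI[OF a] by blast
qed

lemma ap_mean_tendsto:
  fixes f :: "int \<Rightarrow> 'b::banach"
  assumes "trans_precompact f"
  shows "(\<lambda>n. window_avg f n s) \<longlonglongrightarrow> ap_mean f"
  by (rule LIMSEQ_I_le) (use ap_mean_uniform[OF assms] in blast)

lemma cis_ne_1:
  assumes "0 < \<bar>x\<bar>" "\<bar>x\<bar> < 2 * pi"
  shows "cis x \<noteq> 1"
proof
  assume "cis x = 1"
  hence "cos x = 1" by (simp add: complex_eq_iff)
  then obtain n :: int where n: "x = n * 2 * pi" by (auto simp: cos_one_2pi_int)
  show False
  proof (cases "n = 0")
    case True thus False using n assms by simp
  next
    case False
    hence "\<bar>real_of_int n\<bar> \<ge> 1" by linarith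
    hence "\<bar>x\<bar> \<ge> 2 * pi" using n pi_gt_zero by (simp add: abs_mult)
    thus False using assms by simp
  qed
qed

(* Partial sums of a nontrivial character are bounded (geometric series). *)
lemma norm_sum_cis_le:
  assumes "cis x \<noteq> 1"
  shows "norm (\<Sum>j<n. cis (x * real j)) \<le> 2 / norm (cis x - 1)"
proof -
  have "(\<Sum>j<n. cis (x * real j)) = (\<Sum>j<n. (cis x) ^ j)"
    by (simp add: Complex.DeMoivre mult.commute)
  also have "\<dots> = ((cis x) ^ n - 1) / (cis x - 1)" by (rule geometric_sum[OF assms])
  finally have eq: "(\<Sum>j<n. cis (x * real j)) = ((cis x) ^ n - 1) / (cis x - 1)" .
  have "norm ((cis x) ^ n - 1) \<le> norm ((cis x) ^ n) + norm (1::complex)" by (rule norm_triangle_ineq4)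
  also have "\<dots> = 2" by (simp add: norm_power)
  finally have "norm ((cis x) ^ n - 1) \<le> 2" .
  thus ?thesis unfolding eq norm_divide using assms by (simp add: divide_right_mono)
qed

lemma sum_cis_roots:
  fixes L :: nat and m :: int
  assumes "L > 0" "\<bar>m\<bar> < int L"
  shows "(\<Sum>j<L. cis (2 * pi * real j * real_of_int m / real L)) = (if m = 0 then of_nat L else 0)"
proof (cases "m = 0")
  case True thus ?thesis by simp
next
  case False
  define x where "x = 2 * pi * real_of_int m / real L"
  have "\<bar>x\<bar> = 2 * pi * \<bar>real_of_int m\<bar> / real L" using assms(1) by (simp add: x_def abs_mult)
  moreover have "\<bar>real_of_int m\<bar> < real L" using assms(2) by linarith
  moreover have "\<bar>real_of_int m\<bar> > 0" using False by simp
  ultimately have x: "0 < \<bar>x\<bar>" "\<bar>x\<bar> < 2 * pi" using assms(1) by (auto simp: divide_less_eq)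
  have z: "cis x \<noteq> 1" by (rule cis_ne_1[OF x])
  have "(\<Sum>j<L. cis (2 * pi * real j * real_of_int m / real L)) = (\<Sum>j<L. (cis x) ^ j)"
    by (simp add: Complex.DeMoivre x_def mult.commute mult.left_commute)
  also have "\<dots> = ((cis x) ^ L - 1) / (cis x - 1)" by (rule geometric_sum[OF z])
  also have "(cis x) ^ L = cis (2 * pi * real_of_int m)"
    using assms(1) by (simp add: Complex.DeMoivre x_def)
  also have "\<dots> = 1" by (rule cis_multiple_2pi) simp
  finally show ?thesis using False by simp
qed

lemma sum_if_less:
  fixes m n :: nat
  assumes "m \<le> n"
  shows "(\<Sum>i<n. if i < m then F i else 0) = (\<Sum>i<m. F i)"
proof -
  have "(\<Sum>i<n. if i < m then F i else 0) = (\<Sum>i\<in>{i\<in>{..<n}. i < m}. F i)"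
    by (rule sum.inter_filter[OF finite_lessThan, symmetric])
  also have "{i\<in>{..<n}. i < m} = {..<m}" using assms by auto
  finally show ?thesis .
qed

lemma sum_cis_roots_double:
  fixes T :: nat and m :: int
  assumes "T > 0" "\<bar>m\<bar> < 2 * int T"
  shows "(\<Sum>j<2*T. cis (pi * real j / real T * real_of_int m)) = (if m = 0 then of_nat (2*T) else 0)"
proof -
  have "(\<Sum>j<2*T. cis (pi * real j / real T * real_of_int m))
      = (\<Sum>j<2*T. cis (2 * pi * real j * real_of_int m / real (2*T)))"
    using assms(1) by (intro sum.cong refl arg_cong[where f=cis]) (simp add: field_simps)
  also have "\<dots> = (if m = 0 then of_nat (2*T) else 0)"
    using assms by (intro sum_cis_roots) auto
  finally show ?thesis .
qed

lemma sum_int_window: "(\<Sum>t\<in>{s..s + int b - 1}. F t) = (\<Sum>j<b. F (s + int j))"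
proof -
  have img: "{s..s + int b - 1} = (\<lambda>j. s + int j) ` {..<b}"
  proof (rule equalityI)
    show "{s..s + int b - 1} \<subseteq> (\<lambda>j. s + int j) ` {..<b}"
    proof
      fix t assume t: "t \<in> {s..s + int b - 1}"
      hence "t = s + int (nat (t - s))" "nat (t - s) < b" by auto
      thus "t \<in> (\<lambda>j. s + int j) ` {..<b}" by blast
    qed
    show "(\<lambda>j. s + int j) ` {..<b} \<subseteq> {s..s + int b - 1}" by auto
  qed
  have inj: "inj_on (\<lambda>j. s + int j) {..<b}" by (auto simp: inj_on_def)
  show ?thesis unfolding img by (simp add: sum.reindex[OF inj])
qed

lemma window_sum_cis_bound:
  assumes "cis a \<noteq> 1"
  shows "norm (\<Sum>t\<in>{s..s + int b - 1}. cis (a * real_of_int t)) \<le> 2 / norm (cis a - 1)"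
proof -
  have "(\<Sum>t\<in>{s..s + int b - 1}. cis (a * real_of_int t)) = (\<Sum>j<b. cis (a * real_of_int s) * cis (a * real j))"
    unfolding sum_int_window by (intro sum.cong refl) (simp add: cis_mult distrib_left)
  also have "\<dots> = cis (a * real_of_int s) * (\<Sum>j<b. cis (a * real j))" by (simp add: sum_distrib_left)
  finally have "norm (\<Sum>t\<in>{s..s + int b - 1}. cis (a * real_of_int t)) = norm (\<Sum>j<b. cis (a * real j))"
    by (simp add: norm_mult)
  thus ?thesis using norm_sum_cis_le[OF assms, of b] by simp
qed

lemma window_avg_cis_tendsto:
  assumes "\<bar>a\<bar> < 2 * pi"
  shows "(\<lambda>n. window_avg (\<lambda>t. cis (a * real_of_int t)) n 0) \<longlonglongrightarrow> (if a = 0 then 1 else 0)"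
proof (cases "a = 0")
  case True
  have "\<forall>\<^sub>F n in sequentially. (1::complex) = window_avg (\<lambda>t. cis (a * real_of_int t)) n 0"
    unfolding eventually_sequentially
    by (intro exI[of _ 1] allI impI) (simp add: True window_avg_complex)
  hence "(\<lambda>n. window_avg (\<lambda>t. cis (a * real_of_int t)) n 0) \<longlonglongrightarrow> 1"
    by (rule Lim_transform_eventually[OF tendsto_const])
  thus ?thesis using True by simp
next
  case False
  have z: "cis a \<noteq> 1" using False assms by (intro cis_ne_1) auto
  have "(\<lambda>n. window_avg (\<lambda>t. cis (a * real_of_int t)) n 0) \<longlonglongrightarrow> 0"
  proof (rule Lim_null_comparison)
    show "\<forall>\<^sub>F n in sequentially. norm (window_avg (\<lambda>t. cis (a * real_of_int t)) n 0) \<le> (2 / norm (cis a - 1)) / real n"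
    proof (intro always_eventually allI)
      fix n
      have "norm (window_avg (\<lambda>t. cis (a * real_of_int t)) n 0) = norm (\<Sum>j<n. cis (a * real j)) / real n"
        by (simp add: window_avg_complex norm_divide)
      also have "\<dots> \<le> (2 / norm (cis a - 1)) / real n"
        by (intro divide_right_mono norm_sum_cis_le z) simp
      finally show "norm (window_avg (\<lambda>t. cis (a * real_of_int t)) n 0) \<le> (2 / norm (cis a - 1)) / real n" .
    qed
    show "(\<lambda>n. (2 / norm (cis a - 1)) / real n) \<longlonglongrightarrow> 0" by (rule lim_const_over_n)
  qed
  thus ?thesis using False by simp
qed

(* Recurrence: a value of size c > 0 is approximated within c/2 in every window of some fixed
   length W, because the finitely many approximating shifts r have |r| <= D. *)
lemma trans_precompact_recurrence:
  fixes \<phi> :: "int \<Rightarrow> 'b::real_normed_vector"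
  assumes tb: "trans_precompact \<phi>" and c: "norm (\<phi> t0) = c" "c > 0"
  shows "\<exists>W\<ge>1. \<forall>s. \<exists>j<W. norm (\<phi> (s + int j)) \<ge> c/2"
proof -
  obtain R where R: "finite R" "\<forall>a. \<exists>r\<in>R. \<forall>t. norm (\<phi> (t + a) - \<phi> (t + r)) \<le> c/2"
    using tb c unfolding trans_precompact_def by (meson half_gt_zero)
  define D where "D = Max (insert 0 ((\<lambda>r. \<bar>r\<bar>) ` R))"
  have D: "\<bar>r\<bar> \<le> D" if "r \<in> R" for r
    unfolding D_def using R(1) that by (intro Max_ge) auto
  have D0: "D \<ge> 0" unfolding D_def using R(1) by (intro Max_ge) auto
  define W where "W = nat (2 * D + 1)"
  have "\<exists>j<W. norm (\<phi> (s + int j)) \<ge> c/2" for s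
  proof -
    define a where "a = s + D - t0"
    obtain r where r: "r \<in> R" "\<forall>t. norm (\<phi> (t + a) - \<phi> (t + r)) \<le> c/2" using R(2) by blast
    have "norm (\<phi> (t0 - r + a) - \<phi> t0) \<le> c/2" using r(2)[rule_format, of "t0 - r"] by simp
    moreover have "norm (\<phi> t0) \<le> norm (\<phi> (t0 - r + a)) + norm (\<phi> (t0 - r + a) - \<phi> t0)"
      using norm_triangle_ineq4[of "\<phi> (t0 - r + a)" "\<phi> (t0 - r + a) - \<phi> t0"] by simp
    ultimately have big: "norm (\<phi> (t0 - r + a)) \<ge> c/2" using c by linarith
    have rD: "\<bar>r\<bar> \<le> D" using D r(1) by blast
    have "nat (D - r) < W" "s + int (nat (D - r)) = t0 - r + a"
      using rD unfolding W_def a_def by auto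
    thus ?thesis using big by metis
  qed
  moreover have "W \<ge> 1" using D0 by (simp add: W_def)
  ultimately show ?thesis by blast
qed

(* A translation-precompact function with vanishing mean square vanishes identically: by
   recurrence, the mean of |phi|^2 over k W points is at least (c/2)^2 / W. *)
lemma mean_square_zero_imp_zero:
  fixes \<phi> :: "int \<Rightarrow> 'b::real_normed_vector"
  assumes tb: "trans_precompact \<phi>" and lim: "(\<lambda>U. (\<Sum>u<U. (norm (\<phi> (int u)))\<^sup>2) / real U) \<longlonglongrightarrow> 0"
  shows "\<phi> t0 = 0"
proof (rule ccontr)
  assume "\<phi> t0 \<noteq> 0"
  then obtain c where c: "norm (\<phi> t0) = c" "c > 0" by simp
  obtain W where W1: "W \<ge> 1" and block: "\<forall>s. \<exists>j<W. norm (\<phi> (s + int j)) \<ge> c/2"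
    using trans_precompact_recurrence[OF tb c] by blast
  have lower: "(\<Sum>u<k * W. (norm (\<phi> (int u)))\<^sup>2) \<ge> real k * (c/2)\<^sup>2" for k
  proof -
    have "(\<Sum>u<k * W. (norm (\<phi> (int u)))\<^sup>2) = (\<Sum>i<k. \<Sum>u\<in>{i * W..<i * W + W}. (norm (\<phi> (int u)))\<^sup>2)"
      by (rule sum.nat_group[symmetric])
    also have "\<dots> = (\<Sum>i<k. \<Sum>j<W. (norm (\<phi> (int (i * W) + int j)))\<^sup>2)"
      by (simp add: sum_atLeastLessThan_shift)
    also have "\<dots> \<ge> (\<Sum>i<k. (c/2)\<^sup>2)"
    proof (rule sum_mono)
      fix i
      obtain j where j: "j < W" "norm (\<phi> (int (i * W) + int j)) \<ge> c/2" using block by blast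
      have "(c/2)\<^sup>2 \<le> (norm (\<phi> (int (i * W) + int j)))\<^sup>2"
        using j(2) c by (intro power_mono) auto
      also have "\<dots> \<le> (\<Sum>j<W. (norm (\<phi> (int (i * W) + int j)))\<^sup>2)"
        using j(1) by (intro member_le_sum) auto
      finally show "(c/2)\<^sup>2 \<le> (\<Sum>j<W. (norm (\<phi> (int (i * W) + int j)))\<^sup>2)" .
    qed
    finally show ?thesis by simp
  qed
  define q where "q = (c/2)\<^sup>2 / real W"
  have q: "q > 0" using c W1 by (simp add: q_def)
  obtain N where N: "\<forall>U\<ge>N. (\<Sum>u<U. (norm (\<phi> (int u)))\<^sup>2) / real U < q"
    using order_tendstoD(2)[OF lim q] unfolding eventually_sequentially by blast
  define k where "k = N + 1"
  have kW: "k * W \<ge> N" using W1 unfolding k_def by (metis le_add1 le_trans mult_le_mono2 nat_mult_1_right)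
  have "k * W > 0" using W1 by (simp add: k_def)
  hence pos: "real (k * W) > 0" by linarith
  have "(\<Sum>u<k * W. (norm (\<phi> (int u)))\<^sup>2) / real (k * W) \<ge> q"
  proof -
    have "q * real (k * W) = real k * (c/2)\<^sup>2" using W1 by (simp add: q_def)
    also have "\<dots> \<le> (\<Sum>u<k * W. (norm (\<phi> (int u)))\<^sup>2)" by (rule lower)
    finally show ?thesis using pos by (simp add: le_divide_eq)
  qed
  with N kW show False by (meson not_less)
qed

lemma nn_integral_finite_weights:
  fixes w :: "nat \<Rightarrow> real"
  assumes nn: "\<And>j. w j \<ge> 0" and supp: "\<And>j. j \<ge> L \<Longrightarrow> w j = 0" and one: "(\<Sum>j<L. w j) = 1"
  shows "(\<integral>\<^sup>+x. ennreal (w x) \<partial>count_space UNIV) = 1"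
proof -
  have "(\<integral>\<^sup>+x. ennreal (w x) \<partial>count_space UNIV) = (\<Sum>x\<in>{..<L}. ennreal (w x))"
    by (rule nn_integral_count_space') (use supp in auto)
  also have "\<dots> = ennreal (\<Sum>x<L. w x)" using nn by simp
  finally show ?thesis using one by simp
qed

lemma integral_finite_weights:
  fixes w :: "nat \<Rightarrow> real" and f :: "real \<Rightarrow> 'x::{banach,second_countable_topology}"
  assumes nn: "\<And>j. w j \<ge> 0" and supp: "\<And>j. j \<ge> L \<Longrightarrow> w j = 0" and one: "(\<Sum>j<L. w j) = 1"
    and f: "f \<in> borel_measurable borel"
  shows "integral\<^sup>L (distr (measure_pmf (embed_pmf w)) borel th) f = (\<Sum>j<L. w j *\<^sub>R f (th j))"
proof -
  note total_one = nn_integral_finite_weights[OF nn supp one]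
  have "integral\<^sup>L (distr (measure_pmf (embed_pmf w)) borel th) f = integral\<^sup>L (measure_pmf (embed_pmf w)) (\<lambda>x. f (th x))"
    by (rule integral_distr) (simp_all add: f)
  also have "\<dots> = (\<Sum>a\<in>{..<L}. pmf (embed_pmf w) a *\<^sub>R f (th a))"
  proof (rule integral_measure_pmf)
    fix a assume "a \<in> set_pmf (embed_pmf w)"
    hence "w a \<noteq> 0" using set_embed_pmf[of w, OF nn total_one] by auto
    thus "a \<in> {..<L}" using supp by (meson lessThan_iff not_less)
  qed simp
  also have "\<dots> = (\<Sum>j<L. w j *\<^sub>R f (th j))"
    using pmf_embed_pmf[of w, OF nn total_one] by simp
  finally show ?thesis .
qed

lemma real_distribution_distr_pmf: "real_distribution (distr (measure_pmf p) borel (th :: 'a \<Rightarrow> real))"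
proof -
  have "prob_space (distr (measure_pmf p) borel th)"
    by (rule prob_space.prob_space_distr[OF prob_space_measure_pmf]) simp
  thus ?thesis unfolding real_distribution_def real_distribution_axioms_def by simp
qed

lemma cis_borel: "(\<lambda>x::real. cis (a * x)) \<in> borel_measurable borel"
  by (intro borel_measurable_continuous_onI continuous_intros)

lemma isCont_cis_lin: "isCont (\<lambda>x::real. cis (c * x)) x"
proof -
  have "continuous_on UNIV (\<lambda>x::real. cis (c * x))" by (intro continuous_intros)
  thus ?thesis by (simp add: continuous_on_eq_continuous_at)
qed

lemma periodogram_sample_point:
  assumes "j < 2 * T" "T \<ge> 1"
  shows "pi * real j / real T \<in> {-1<..8}"
proof -
  have "real j / real T < 2" using assms by (simp add: divide_less_eq)
  hence "pi * (real j / real T) \<le> pi * 2" using pi_gt_zero by (intro mult_left_mono) auto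
  hence "pi * real j / real T \<le> pi * 2" by simp
  moreover have "0 \<le> pi * real j / real T" by simp
  ultimately show ?thesis using pi_less_4 unfolding greaterThanAtMost_iff by linarith
qed

(* Uniqueness theorem for almost periodic functions: throughout, g is a translation-precompact
   complex function all of whose Fourier coefficients M_t(g t e^{-i l t}) vanish. *)
context
  fixes g :: "int \<Rightarrow> complex"
  assumes g_precompact: "trans_precompact g"
    and g_coeffs_zero: "\<And>l. ap_mean (\<lambda>t. g t * cis (- (l * real_of_int t))) = 0"
begin

definition autocorr :: "int \<Rightarrow> complex" where
  "autocorr u = ap_mean (\<lambda>t. g (t + u) * cnj (g t))"

lemma autocorr_summand_precompact: "trans_precompact (\<lambda>t. g (t + u) * cnj (g t))"
  by (intro trans_precompact_mult trans_precompact_shift trans_precompact_cnj g_precompact)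

lemma autocorr_tendsto: "(\<lambda>T. window_avg (\<lambda>t. g (t + u) * cnj (g t)) T 0) \<longlonglongrightarrow> autocorr u"
  unfolding autocorr_def by (rule ap_mean_tendsto[OF autocorr_summand_precompact])

lemma g_bounded: "\<exists>B>0. \<forall>t. norm (g t) \<le> B"
  by (rule trans_precompact_bounded[OF g_precompact])

lemma autocorr_bounded: "\<exists>C>0. \<forall>u. norm (autocorr u) \<le> C"
proof -
  obtain B where B: "B > 0" "\<forall>t. norm (g t) \<le> B" using g_bounded by blast
  have "norm (autocorr u) \<le> B * B" for u
  proof (rule Lim_norm_ubound[OF _ autocorr_tendsto])
    show "\<forall>\<^sub>F T in sequentially. norm (window_avg (\<lambda>t. g (t + u) * cnj (g t)) T 0) \<le> B * B"
    proof (intro always_eventually allI window_avg_norm_le)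
      fix T t
      show "norm (g (t + u) * cnj (g t)) \<le> B * B"
        unfolding norm_mult complex_mod_cnj using B by (intro mult_mono) auto
    qed
  qed simp
  thus ?thesis using B(1) by (intro exI[of _ "B * B"]) auto
qed

(* h inherits precompactness from g: replacing the shift a of h by r changes it by at most
   sup |g(. + a) - g(. + r)| * sup |g|. *)
lemma autocorr_precompact: "trans_precompact autocorr"
  unfolding trans_precompact_def
proof (intro allI impI)
  fix e :: real assume e: "e > 0"
  obtain B where B: "B > 0" "\<forall>t. norm (g t) \<le> B" using g_bounded by blast
  obtain R where R: "finite R" "\<forall>a. \<exists>r\<in>R. \<forall>t. norm (g (t + a) - g (t + r)) \<le> e / B"
    using g_precompact e B(1) unfolding trans_precompact_def by (meson divide_pos_pos)
  have "\<exists>r\<in>R. \<forall>t. norm (autocorr (t + a) - autocorr (t + r)) \<le> e" for a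
  proof -
    obtain r where r: "r \<in> R" "\<forall>t. norm (g (t + a) - g (t + r)) \<le> e / B" using R(2) by blast
    have "norm (autocorr (t + a) - autocorr (t + r)) \<le> e" for t
    proof (rule Lim_norm_ubound[OF _ tendsto_diff[OF autocorr_tendsto autocorr_tendsto]])
      show "\<forall>\<^sub>F T in sequentially. norm (window_avg (\<lambda>x. g (x + (t + a)) * cnj (g x)) T 0
               - window_avg (\<lambda>x. g (x + (t + r)) * cnj (g x)) T 0) \<le> e"
      proof (intro always_eventually allI)
        fix T
        have eq: "window_avg (\<lambda>x. g (x + (t + a)) * cnj (g x)) T 0 - window_avg (\<lambda>x. g (x + (t + r)) * cnj (g x)) T 0
              = window_avg (\<lambda>x. (g (x + t + a) - g (x + t + r)) * cnj (g x)) T 0"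
          unfolding window_avg_complex by (simp add: diff_divide_distrib sum_subtractf algebra_simps)
        have "norm (window_avg (\<lambda>x. (g (x + t + a) - g (x + t + r)) * cnj (g x)) T 0) \<le> e / B * B"
        proof (rule window_avg_norm_le)
          fix x
          show "norm ((g (x + t + a) - g (x + t + r)) * cnj (g x)) \<le> e / B * B"
            unfolding norm_mult complex_mod_cnj
            using r(2)[rule_format, of "x + t"] B e by (intro mult_mono) auto
        qed
        thus "norm (window_avg (\<lambda>x. g (x + (t + a)) * cnj (g x)) T 0
               - window_avg (\<lambda>x. g (x + (t + r)) * cnj (g x)) T 0) \<le> e"
          unfolding eq using B(1) by simp
      qed
    qed simp
    thus ?thesis using r(1) by blast
  qed
  thus "\<exists>R. finite R \<and> (\<forall>a. \<exists>r\<in>R. \<forall>t. norm (autocorr (t + a) - autocorr (t + r)) \<le> e)" using R(1) by blast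
qed

(* Averaging the identity g(t+u) conj(g t) e^{-i l u} = (g(t+u) e^{-i l (t+u)}) (conj(g t) e^{i l t})
   first over u < U and then over t: the inner average is a window average of the function
   G = g e^{-i l .}, whose mean is zero. *)
lemma autocorr_coeff_double_average:
  "window_avg (\<lambda>t. cnj (g t) * cis (l * real_of_int t) * window_avg (\<lambda>x. g x * cis (- (l * real_of_int x))) U t) T 0
   = (\<Sum>u<U. window_avg (\<lambda>t. g (t + int u) * cnj (g t)) T 0 * cis (- (l * real_of_int (int u)))) / of_nat U"
proof -
  have termeq: "cnj (g t) * cis (l * real_of_int t) * (g (t + int u) * cis (- (l * real_of_int (t + int u))))
      = g (t + int u) * cnj (g t) * cis (- (l * real_of_int (int u)))" for t u
  proof -
    have c: "cis (l * real_of_int t) * cis (- (l * real_of_int (t + int u))) = cis (- (l * real_of_int (int u)))"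
      by (simp add: cis_mult algebra_simps)
    have "cnj (g t) * cis (l * real_of_int t) * (g (t + int u) * cis (- (l * real_of_int (t + int u))))
        = g (t + int u) * cnj (g t) * (cis (l * real_of_int t) * cis (- (l * real_of_int (t + int u))))"
      by (simp add: ac_simps)
    thus ?thesis unfolding c .
  qed
  have "window_avg (\<lambda>t. cnj (g t) * cis (l * real_of_int t) * window_avg (\<lambda>x. g x * cis (- (l * real_of_int x))) U t) T 0
      = (\<Sum>t<T. \<Sum>u<U. cnj (g (int t)) * cis (l * real_of_int (int t)) * (g (int t + int u) * cis (- (l * real_of_int (int t + int u))))) / (of_nat U * of_nat T)"
    unfolding window_avg_complex by (simp add: sum_distrib_left sum_divide_distrib)
  also have "\<dots> = (\<Sum>u<U. \<Sum>t<T. g (int t + int u) * cnj (g (int t)) * cis (- (l * real_of_int (int u)))) / (of_nat U * of_nat T)"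
    by (simp only: termeq sum.swap[of _ "{..<T}"])
  also have "\<dots> = (\<Sum>u<U. window_avg (\<lambda>t. g (t + int u) * cnj (g t)) T 0 * cis (- (l * real_of_int (int u)))) / of_nat U"
  proof -
    have inner: "(\<Sum>t<T. c * x t / (of_nat T * of_nat U)) = c * (\<Sum>t<T. x t / of_nat T) / of_nat U"
      for c :: complex and x :: "nat \<Rightarrow> complex"
      by (simp add: sum_divide_distrib[symmetric] sum_distrib_left[symmetric] divide_divide_eq_left)
    show ?thesis
      unfolding window_avg_complex by (simp add: sum_divide_distrib mult.commute) (simp add: inner)
  qed
  finally show ?thesis .
qed

lemma autocorr_coeffs_tendsto: "(\<lambda>U. window_avg (\<lambda>u. autocorr u * cis (- (l * real_of_int u))) U 0) \<longlonglongrightarrow> 0"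
proof (rule LIMSEQ_I_le)
  fix e :: real assume e: "e > 0"
  define G where "G = (\<lambda>x. g x * cis (- (l * real_of_int x)))"
  have "trans_precompact (\<lambda>t. g t * cis ((- l) * real_of_int t))"
    by (intro trans_precompact_mult g_precompact trans_precompact_cis)
  hence tbG: "trans_precompact G" unfolding G_def by simp
  have "ap_mean G = 0" unfolding G_def by (rule g_coeffs_zero)
  obtain B where B: "B > 0" "\<forall>t. norm (g t) \<le> B" using g_bounded by blast
  obtain N where N: "\<forall>n\<ge>N. \<forall>s. norm (window_avg G n s) \<le> e / B"
    using ap_mean_uniform[OF tbG, of "e / B"] \<open>ap_mean G = 0\<close> e B(1) by auto
  have "norm (window_avg (\<lambda>u. autocorr u * cis (- (l * real_of_int u))) U 0) \<le> e" if U: "U \<ge> N" for U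
  proof (rule Lim_norm_ubound)
    define Q where "Q = (\<lambda>T. window_avg (\<lambda>t. cnj (g t) * cis (l * real_of_int t) * window_avg G U t) T 0)"
    have "window_avg (\<lambda>u. autocorr u * cis (- (l * real_of_int u))) U 0
        = (\<Sum>u<U. autocorr (int u) * cis (- (l * real_of_int (int u)))) / of_nat U"
      by (simp add: window_avg_complex)
    thus "Q \<longlonglongrightarrow> window_avg (\<lambda>u. autocorr u * cis (- (l * real_of_int u))) U 0"
      unfolding Q_def G_def autocorr_coeff_double_average divide_inverse
      by (auto intro!: tendsto_mult_right tendsto_sum autocorr_tendsto)
    have "norm (Q T) \<le> B * (e / B)" for T
      unfolding Q_def
    proof (rule window_avg_norm_le)
      fix t
      have "norm (g t) * norm (window_avg G U t) \<le> B * (e / B)"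
        using B N U by (intro mult_mono) auto
      thus "norm (cnj (g t) * cis (l * real_of_int t) * window_avg G U t) \<le> B * (e / B)"
        unfolding norm_mult complex_mod_cnj by simp
    qed
    thus "\<forall>\<^sub>F T in sequentially. norm (Q T) \<le> e" using B(1) by simp
  qed simp
  thus "\<exists>N. \<forall>U\<ge>N. norm (window_avg (\<lambda>u. autocorr u * cis (- (l * real_of_int u))) U 0 - 0) \<le> e"
    by auto
qed

definition dft :: "nat \<Rightarrow> real \<Rightarrow> complex" where
  "dft T th = (\<Sum>t<T. g (int t) * cis (- (th * real t)))"

lemma cis_mult_periodogram:
  "cis (real k * th) * of_real ((norm (dft T th))\<^sup>2)
   = (\<Sum>t<T. \<Sum>t'<T. g (int t) * cnj (g (int t')) * cis (th * real_of_int (int k - int t + int t')))"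
proof -
  have "of_real ((norm (dft T th))\<^sup>2) = dft T th * cnj (dft T th)" by (rule complex_norm_square)
  also have "\<dots> = (\<Sum>t<T. \<Sum>t'<T. (g (int t) * cis (- (th * real t))) * (cnj (g (int t')) * cis (th * real t')))"
    unfolding dft_def cnj_sum by (simp add: sum_product cis_cnj)
  finally have "cis (real k * th) * of_real ((norm (dft T th))\<^sup>2)
      = (\<Sum>t<T. \<Sum>t'<T. cis (real k * th) * ((g (int t) * cis (- (th * real t))) * (cnj (g (int t')) * cis (th * real t'))))"
    by (simp add: sum_distrib_left)
  also have "\<dots> = (\<Sum>t<T. \<Sum>t'<T. g (int t) * cnj (g (int t')) * cis (th * real_of_int (int k - int t + int t')))"
  proof (intro sum.cong refl)
    fix t t'
    have "cis (real k * th) * ((g (int t) * cis (- (th * real t))) * (cnj (g (int t')) * cis (th * real t')))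
        = g (int t) * cnj (g (int t')) * (cis (real k * th) * cis (- (th * real t)) * cis (th * real t'))"
      by (simp add: ac_simps)
    also have "cis (real k * th) * cis (- (th * real t)) * cis (th * real t') = cis (th * real_of_int (int k - int t + int t'))"
      by (simp add: cis_mult algebra_simps)
    finally show "cis (real k * th) * ((g (int t) * cis (- (th * real t))) * (cnj (g (int t')) * cis (th * real t')))
        = g (int t) * cnj (g (int t')) * cis (th * real_of_int (int k - int t + int t'))" .
  qed
  finally show ?thesis .
qed

(* Sampling the periodogram at the 2T points pi j / T recovers the empirical autocorrelations. *)
lemma periodogram_moment:
  assumes "k < T"
  shows "(\<Sum>j<2*T. cis (real k * (pi * real j / real T)) * of_real ((norm (dft T (pi * real j / real T)))\<^sup>2))
       = of_nat (2*T) * (\<Sum>t<T-k. g (int t + int k) * cnj (g (int t)))"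
proof -
  have T: "T > 0" using assms by simp
  have "(\<Sum>j<2*T. cis (real k * (pi * real j / real T)) * of_real ((norm (dft T (pi * real j / real T)))\<^sup>2))
      = (\<Sum>j<2*T. \<Sum>t<T. \<Sum>t'<T. g (int t) * cnj (g (int t')) * cis (pi * real j / real T * real_of_int (int k - int t + int t')))"
    by (simp only: cis_mult_periodogram)
  also have "\<dots> = (\<Sum>t<T. \<Sum>t'<T. \<Sum>j<2*T. g (int t) * cnj (g (int t')) * cis (pi * real j / real T * real_of_int (int k - int t + int t')))"
    by (subst sum.swap, subst (2) sum.swap) (rule refl)
  also have "\<dots> = (\<Sum>t<T. \<Sum>t'<T. g (int t) * cnj (g (int t')) * (if t = t' + k then of_nat (2*T) else 0))"
  proof (intro sum.cong refl)
    fix t t' assume "t \<in> {..<T}" "t' \<in> {..<T}"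
    hence m: "\<bar>int k - int t + int t'\<bar> < 2 * int T" using assms by auto
    have "(\<Sum>j<2*T. g (int t) * cnj (g (int t')) * cis (pi * real j / real T * real_of_int (int k - int t + int t')))
        = g (int t) * cnj (g (int t')) * (\<Sum>j<2*T. cis (pi * real j / real T * real_of_int (int k - int t + int t')))"
      by (simp add: sum_distrib_left)
    also have "\<dots> = g (int t) * cnj (g (int t')) * (if int k - int t + int t' = 0 then of_nat (2*T) else 0)"
      by (simp only: sum_cis_roots_double[OF T m])
    also have "(int k - int t + int t' = 0) = (t = t' + k)" by linarith
    finally show "(\<Sum>j<2*T. g (int t) * cnj (g (int t')) * cis (pi * real j / real T * real_of_int (int k - int t + int t')))
        = g (int t) * cnj (g (int t')) * (if t = t' + k then of_nat (2*T) else 0)" .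
  qed
  also have "\<dots> = (\<Sum>t'<T. \<Sum>t<T. if t = t' + k then g (int t) * cnj (g (int t')) * of_nat (2*T) else 0)"
    by (subst sum.swap) (intro sum.cong refl, simp)
  also have "\<dots> = (\<Sum>t'<T. if t' < T - k then g (int t' + int k) * cnj (g (int t')) * of_nat (2*T) else 0)"
  proof (intro sum.cong refl)
    fix t' assume "t' \<in> {..<T}"
    show "(\<Sum>t<T. if t = t' + k then g (int t) * cnj (g (int t')) * of_nat (2*T) else 0)
        = (if t' < T - k then g (int t' + int k) * cnj (g (int t')) * of_nat (2*T) else 0)"
      by (subst sum.delta[OF finite_lessThan]) auto
  qed
  also have "\<dots> = (\<Sum>t'<T - k. g (int t' + int k) * cnj (g (int t')) * of_nat (2*T))"
    by (rule sum_if_less) simp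
  also have "\<dots> = of_nat (2*T) * (\<Sum>t<T-k. g (int t + int k) * cnj (g (int t)))"
    by (simp add: sum_distrib_left mult.commute)
  finally show ?thesis .
qed

definition partial_autocorr :: "nat \<Rightarrow> nat \<Rightarrow> complex" where
  "partial_autocorr T k = (\<Sum>t<T-k. g (int t + int k) * cnj (g (int t))) / of_nat T"

definition mean_square :: "nat \<Rightarrow> real" where
  "mean_square T = (\<Sum>t<T. (norm (g (int t)))\<^sup>2) / real T"

(* The empirical autocorrelations at lag k differ from window averages by k boundary terms,
   so they converge to h; in particular the empirical mean square converges to h(0). *)
lemma partial_autocorr_0: "partial_autocorr T 0 = of_real (mean_square T)"
proof -
  have "partial_autocorr T 0 = (\<Sum>t<T. g (int t) * cnj (g (int t))) / of_nat T" by (simp add: partial_autocorr_def)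
  also have "\<dots> = (\<Sum>t<T. complex_of_real ((norm (g (int t)))\<^sup>2)) / of_nat T"
    by (simp only: complex_norm_square)
  also have "\<dots> = of_real (mean_square T)" unfolding mean_square_def of_real_divide of_real_sum by simp
  finally show ?thesis .
qed

lemma partial_autocorr_tendsto: "(\<lambda>T. partial_autocorr T k) \<longlonglongrightarrow> autocorr (int k)"
proof -
  obtain B where B: "B > 0" "\<forall>t. norm (g t) \<le> B" using g_bounded by blast
  define X where "X = (\<lambda>t::nat. g (int t + int k) * cnj (g (int t)))"
  have Xb: "norm (X t) \<le> B * B" for t
    unfolding X_def norm_mult complex_mod_cnj using B by (intro mult_mono) auto
  have avgeq: "window_avg (\<lambda>t. g (t + int k) * cnj (g t)) T 0 = (\<Sum>t<T. X t) / of_nat T" for T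
    by (simp add: window_avg_complex X_def)
  define D where "D = (\<lambda>T. window_avg (\<lambda>t. g (t + int k) * cnj (g t)) T 0 - partial_autocorr T k)"
  have Db: "norm (D T) \<le> (real k * (B * B)) / real T" if "T \<ge> k" for T
  proof -
    have split: "(\<Sum>t<T. X t) = (\<Sum>t<T-k. X t) + (\<Sum>i<k. X (T - k + i))"
      using sum_lessThan_add_split[of X "T - k" k] that by simp
    have "D T = (\<Sum>t<T. X t) / of_nat T - (\<Sum>t<T-k. X t) / of_nat T"
      unfolding D_def avgeq partial_autocorr_def X_def by simp
    also have "\<dots> = (\<Sum>i<k. X (T - k + i)) / of_nat T"
      unfolding split by (simp add: add_divide_distrib)
    also have "norm \<dots> = norm (\<Sum>i<k. X (T - k + i)) / real T" by (simp add: norm_divide)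
    also have "\<dots> \<le> (real k * (B * B)) / real T"
      by (intro divide_right_mono norm_sum_le_card Xb) simp
    finally show ?thesis .
  qed
  have "D \<longlonglongrightarrow> 0"
  proof (rule Lim_null_comparison)
    show "\<forall>\<^sub>F T in sequentially. norm (D T) \<le> (real k * (B * B)) / real T"
      unfolding eventually_sequentially using Db by blast
    show "(\<lambda>T. (real k * (B * B)) / real T) \<longlonglongrightarrow> 0" by (rule lim_const_over_n)
  qed
  hence "(\<lambda>T. window_avg (\<lambda>t. g (t + int k) * cnj (g t)) T 0 - D T) \<longlonglongrightarrow> autocorr (int k) - 0"
    by (intro tendsto_diff autocorr_tendsto)
  thus ?thesis unfolding D_def by simp
qed

lemma mean_square_tendsto: "mean_square \<longlonglongrightarrow> Re (autocorr 0)"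
proof -
  have "(\<lambda>T. complex_of_real (mean_square T)) \<longlonglongrightarrow> autocorr 0"
    using partial_autocorr_tendsto[of 0] by (simp add: partial_autocorr_0)
  from tendsto_Re[OF this] show ?thesis by simp
qed

lemma periodogram_distribution:
  assumes T: "T \<ge> 1" and ms: "mean_square T > 0"
  shows "\<exists>\<nu>. real_distribution \<nu> \<and> measure \<nu> {-1<..8} = 1 \<and>
           (\<forall>k<T. integral\<^sup>L \<nu> (\<lambda>x. cis (real k * x)) = partial_autocorr T k / of_real (mean_square T))"
proof -
  define th where "th j = pi * real j / real T" for j
  define PP where "PP j = (norm (dft T (th j)))\<^sup>2" for j
  define Z where "Z = real (2 * T) * real T * mean_square T"
  have Z: "Z > 0" using T ms by (simp add: Z_def)
  define w where "w j = (if j < 2 * T then PP j / Z else 0)" for j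
  have moment: "(\<Sum>j<2 * T. cis (real k * th j) * of_real (PP j)) = of_nat (2 * T) * (of_nat T * partial_autocorr T k)"
    if "k < T" for k
    unfolding th_def PP_def using periodogram_moment[OF that] T by (simp add: partial_autocorr_def)
  have sumPP: "(\<Sum>j<2 * T. PP j) = Z"
  proof -
    have "complex_of_real (\<Sum>j<2 * T. PP j) = (\<Sum>j<2 * T. cis (real 0 * th j) * of_real (PP j))"
      by simp
    also have "\<dots> = complex_of_real Z"
      using T by (subst moment) (simp_all add: partial_autocorr_0 Z_def)
    finally show ?thesis by (simp only: of_real_eq_iff)
  qed
  have nn: "w j \<ge> 0" for j
    using Z unfolding w_def PP_def by simp
  have supp: "j \<ge> 2 * T \<Longrightarrow> w j = 0" for j unfolding w_def by simp
  have one: "(\<Sum>j<2 * T. w j) = 1"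
    using Z unfolding w_def by (simp add: sum_divide_distrib[symmetric] sumPP)
  define \<nu> where "\<nu> = distr (measure_pmf (embed_pmf w)) borel th"
  have integral_\<nu>: "integral\<^sup>L \<nu> f = (\<Sum>j<2 * T. w j *\<^sub>R f (th j))"
    if "f \<in> borel_measurable borel" for f :: "real \<Rightarrow> 'x::{banach,second_countable_topology}"
    unfolding \<nu>_def by (rule integral_finite_weights[OF nn supp one that])
  have thr: "th j \<in> {-1<..8}" if "j < 2 * T" for j
    unfolding th_def using that T by (rule periodogram_sample_point)
  have "measure \<nu> {-1<..8} = integral\<^sup>L \<nu> (indicator {-1<..8})"
    by (simp add: \<nu>_def)
  also have "\<dots> = (\<Sum>j<2 * T. w j *\<^sub>R indicator {-1<..8::real} (th j))"
    by (rule integral_\<nu>) simp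
  also have "\<dots> = (\<Sum>j<2 * T. w j)"
    using thr by (intro sum.cong refl) (simp add: indicator_def)
  finally have "measure \<nu> {-1<..8} = (\<Sum>j<2 * T. w j)" .
  moreover have "integral\<^sup>L \<nu> (\<lambda>x. cis (real k * x)) = partial_autocorr T k / of_real (mean_square T)"
    if "k < T" for k
  proof -
    have "integral\<^sup>L \<nu> (\<lambda>x. cis (real k * x)) = (\<Sum>j<2 * T. cis (real k * th j) * of_real (PP j)) / of_real Z"
      unfolding integral_\<nu>[OF cis_borel] w_def
      by (simp add: sum_divide_distrib scaleR_conv_of_real mult.commute)
    also have "\<dots> = partial_autocorr T k / of_real (mean_square T)"
      unfolding moment[OF that] Z_def using T by (simp add: field_simps)
    finally show ?thesis .
  qed
  moreover have "real_distribution \<nu>" unfolding \<nu>_def by (rule real_distribution_distr_pmf)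
  ultimately show ?thesis using one by (intro exI[of _ \<nu>]) simp
qed

(* Herglotz's theorem for h: if h(0) > 0, then h(k)/h(0) (k >= 0) are the Fourier coefficients of
   a probability measure, namely a weak limit of the periodogram distributions, which exists by
   tightness (all of them live on [0, 2 pi]). *)
lemma spectral_measure:
  assumes Spos: "Re (autocorr 0) > 0"
  shows "\<exists>\<mu>. real_distribution \<mu> \<and>
           (\<forall>k::nat. integral\<^sup>L \<mu> (\<lambda>x. cis (real k * x)) = autocorr (int k) / of_real (Re (autocorr 0)))"
proof -
  define S where "S = Re (autocorr 0)"
  have S: "S > 0" using Spos by (simp add: S_def)
  obtain T1 where T1: "\<forall>T\<ge>T1. mean_square T > S/2"
    using order_tendstoD(1)[OF mean_square_tendsto, of "S/2"] S unfolding S_def eventually_sequentially by auto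
  define Tn where "Tn n = n + T1 + 1" for n
  have Tn: "Tn n \<ge> 1" "mean_square (Tn n) > 0" for n
    using T1[rule_format, of "Tn n"] S by (auto simp: Tn_def)
  have "\<forall>n. \<exists>\<nu>. real_distribution \<nu> \<and> measure \<nu> {-1<..8} = 1 \<and>
           (\<forall>k<Tn n. integral\<^sup>L \<nu> (\<lambda>x. cis (real k * x)) = partial_autocorr (Tn n) k / of_real (mean_square (Tn n)))"
    using periodogram_distribution[OF Tn] by blast
  then obtain \<nu> where \<nu>: "\<And>n. real_distribution (\<nu> n)" "\<And>n. measure (\<nu> n) {-1<..8} = 1"
    and coeff_\<nu>: "\<And>n k. k < Tn n \<Longrightarrow>
          integral\<^sup>L (\<nu> n) (\<lambda>x. cis (real k * x)) = partial_autocorr (Tn n) k / of_real (mean_square (Tn n))"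
    by metis
  have "tight \<nu>"
    unfolding tight_def
  proof (intro conjI allI impI \<nu>(1))
    fix \<epsilon> :: real assume "\<epsilon> > 0"
    thus "\<exists>a b::real. a < b \<and> (\<forall>n. measure (\<nu> n) {a<..b} > 1 - \<epsilon>)"
      using \<nu>(2) by (intro exI[of _ "-1"] exI[of _ 8]) auto
  qed
  then obtain r \<mu> where r: "strict_mono r" and \<mu>: "real_distribution \<mu>" and wc: "weak_conv_m (\<nu> \<circ> id \<circ> r) \<mu>"
    using tight_imp_convergent_subsubsequence[of \<nu> id] by (auto simp: strict_mono_def)
  have "integral\<^sup>L \<mu> (\<lambda>x. cis (real k * x)) = autocorr (int k) / of_real S" for k
  proof -
    have l1: "(\<lambda>n. integral\<^sup>L ((\<nu> \<circ> id \<circ> r) n) (\<lambda>x. cis (real k * x))) \<longlonglongrightarrow> integral\<^sup>L \<mu> (\<lambda>x. cis (real k * x))"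
      by (rule weak_conv_imp_integral_bdd_continuous_conv[OF _ \<mu> wc, where B=1]) (auto simp: \<nu> isCont_cis_lin)
    define c' where "c' m = partial_autocorr m k / of_real (mean_square m)" for m
    have "c' \<longlonglongrightarrow> autocorr (int k) / of_real S"
      unfolding c'_def S_def using Spos
      by (intro tendsto_divide partial_autocorr_tendsto tendsto_of_real mean_square_tendsto) auto
    moreover have "strict_mono (\<lambda>n. Tn (r n))"
      using r unfolding strict_mono_def Tn_def by auto
    ultimately have l2: "(c' \<circ> (\<lambda>n. Tn (r n))) \<longlonglongrightarrow> autocorr (int k) / of_real S"
      by (rule LIMSEQ_subseq_LIMSEQ)
    have "\<forall>\<^sub>F n in sequentially. (c' \<circ> (\<lambda>n. Tn (r n))) n = integral\<^sup>L ((\<nu> \<circ> id \<circ> r) n) (\<lambda>x. cis (real k * x))"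
      unfolding eventually_sequentially
    proof (intro exI[of _ k] allI impI)
      fix n assume "k \<le> n"
      hence "k < Tn (r n)" using seq_suble[OF r, of n] unfolding Tn_def by linarith
      thus "(c' \<circ> (\<lambda>n. Tn (r n))) n = integral\<^sup>L ((\<nu> \<circ> id \<circ> r) n) (\<lambda>x. cis (real k * x))"
        by (simp add: coeff_\<nu> c'_def)
    qed
    from Lim_transform_eventually[OF l2 this] show ?thesis using l1 LIMSEQ_unique by blast
  qed
  thus ?thesis using \<mu> unfolding S_def by blast
qed

lemma spectral_integral_window_avg:
  assumes \<mu>: "real_distribution \<mu>" and S: "S \<noteq> 0"
    and co: "\<And>k::nat. integral\<^sup>L \<mu> (\<lambda>x. cis (real k * x)) = autocorr (int k) / of_real S"
  shows "of_real S * integral\<^sup>L \<mu> (\<lambda>x. cnj (window_avg (\<lambda>u. autocorr u * cis (- (x * real_of_int u))) U 0))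
         = complex_of_real ((\<Sum>u<U. (norm (autocorr (int u)))\<^sup>2) / real U)"
proof -
  interpret \<mu>: real_distribution \<mu> by (rule \<mu>)
  have cis_int: "integrable \<mu> (\<lambda>x. cis (a * x))" for a
  proof (rule \<mu>.integrable_const_bound[where B=1])
    show "(\<lambda>x. cis (a * x)) \<in> borel_measurable \<mu>"
      using cis_borel[of a] by (simp add: measurable_cong_sets[OF \<mu>.events_eq_borel refl])
  qed simp
  have "integral\<^sup>L \<mu> (\<lambda>x. cnj (window_avg (\<lambda>u. autocorr u * cis (- (x * real_of_int u))) U 0))
      = integral\<^sup>L \<mu> (\<lambda>x. (\<Sum>u<U. cnj (autocorr (int u)) * cis (real u * x)) / of_nat U)"
    by (simp add: window_avg_complex cis_cnj mult.commute)
  also have "\<dots> = (\<Sum>u<U. cnj (autocorr (int u)) * (autocorr (int u) / of_real S)) / of_nat U"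
    by (simp add: integral_sum cis_int co)
  finally have "of_real S * integral\<^sup>L \<mu> (\<lambda>x. cnj (window_avg (\<lambda>u. autocorr u * cis (- (x * real_of_int u))) U 0))
      = (\<Sum>u<U. autocorr (int u) * cnj (autocorr (int u))) / of_nat U"
    using S by (simp add: sum_distrib_left field_simps)
  also have "\<dots> = complex_of_real ((\<Sum>u<U. (norm (autocorr (int u)))\<^sup>2) / real U)"
    unfolding complex_norm_square of_real_divide of_real_sum by simp
  finally show ?thesis .
qed

(* Dominated convergence against the spectral measure: the window averages of h e^{-i x .}
   tend to zero pointwise and are bounded, so the mean square of h vanishes. *)
lemma autocorr_mean_square_zero:
  assumes Spos: "Re (autocorr 0) > 0"
  shows "(\<lambda>U. (\<Sum>u<U. (norm (autocorr (int u)))\<^sup>2) / real U) \<longlonglongrightarrow> 0"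
proof -
  define S where "S = Re (autocorr 0)"
  obtain \<mu> where \<mu>: "real_distribution \<mu>"
    and co: "\<forall>k::nat. integral\<^sup>L \<mu> (\<lambda>x. cis (real k * x)) = autocorr (int k) / of_real S"
    using spectral_measure[OF Spos] unfolding S_def by blast
  interpret \<mu>: real_distribution \<mu> by (rule \<mu>)
  obtain C where C: "C > 0" "\<forall>u. norm (autocorr u) \<le> C" using autocorr_bounded by blast
  define s where "s U x = cnj (window_avg (\<lambda>u. autocorr u * cis (- (x * real_of_int u))) U 0)" for U x
  have "continuous_on UNIV (\<lambda>x. (\<Sum>u<U. cnj (autocorr (int u)) * cis (real u * x)) * inverse (of_nat U))" for U
    by (intro continuous_on_mult_right continuous_intros)
  hence "s U \<in> borel_measurable borel" for U
    unfolding s_def window_avg_complex divide_inverse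
    by (simp add: cis_cnj mult.commute borel_measurable_continuous_onI)
  hence meas: "s U \<in> borel_measurable \<mu>" for U
    by (simp add: measurable_cong_sets[OF \<mu>.events_eq_borel refl])
  have "(\<lambda>U. integral\<^sup>L \<mu> (s U)) \<longlonglongrightarrow> integral\<^sup>L \<mu> (\<lambda>x. 0)"
  proof (rule integral_dominated_convergence[where w="\<lambda>_. C"])
    show "AE x in \<mu>. (\<lambda>U. s U x) \<longlonglongrightarrow> 0"
      using tendsto_cnj[OF autocorr_coeffs_tendsto] unfolding s_def by simp
    show "AE x in \<mu>. norm (s U x) \<le> C" for U
      unfolding s_def complex_mod_cnj
      by (intro AE_I2 window_avg_norm_le) (use C in \<open>simp add: norm_mult\<close>)
  qed (simp_all add: meas)
  hence "(\<lambda>U. of_real S * integral\<^sup>L \<mu> (s U)) \<longlonglongrightarrow> of_real S * 0"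
    by (intro tendsto_mult tendsto_const) simp
  moreover have "of_real S * integral\<^sup>L \<mu> (s U) = complex_of_real ((\<Sum>u<U. (norm (autocorr (int u)))\<^sup>2) / real U)" for U
    unfolding s_def using Spos co by (intro spectral_integral_window_avg[OF \<mu>]) (auto simp: S_def)
  ultimately have "(\<lambda>U. complex_of_real ((\<Sum>u<U. (norm (autocorr (int u)))\<^sup>2) / real U)) \<longlonglongrightarrow> 0"
    by simp
  thus ?thesis using tendsto_of_real_iff[where 'a=complex] by (metis of_real_0)
qed

(* The uniqueness theorem: g vanishes.  Otherwise M_t |g t|^2 = Re h(0) > 0, whence h = 0 by the
   previous lemma, contradicting h(0) > 0. *)
lemma zero_coeffs_imp_zero: "g t = 0"
proof (cases "Re (autocorr 0) > 0")
  case True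
  have "autocorr 0 = 0"
    by (rule mean_square_zero_imp_zero[OF autocorr_precompact autocorr_mean_square_zero[OF True]])
  thus ?thesis using True by simp
next
  case False
  have "0 \<le> Re (autocorr 0)"
    by (rule LIMSEQ_le_const[OF mean_square_tendsto]) (auto simp: mean_square_def intro!: divide_nonneg_nonneg sum_nonneg)
  hence "mean_square \<longlonglongrightarrow> 0" using False mean_square_tendsto by simp
  thus ?thesis unfolding mean_square_def[abs_def]
    by (rule mean_square_zero_imp_zero[OF g_precompact])
qed

end

definition ap_coeff :: "(int \<Rightarrow> complex) \<Rightarrow> real \<Rightarrow> complex" where
  "ap_coeff f l = ap_mean (\<lambda>t. f t * cis (- (l * real_of_int t)))"

definition ap_spectrum :: "(int \<Rightarrow> complex) \<Rightarrow> real set" where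
  "ap_spectrum f = {l. 0 \<le> l \<and> l < 2 * pi \<and> ap_coeff f l \<noteq> 0}"

lemma cis_frequency_mod_2pi:
  obtains l' where "0 \<le> l'" "l' < 2 * pi" "\<And>t::int. cis (- (l * real_of_int t)) = cis (- (l' * real_of_int t))"
proof
  define q where "q = \<lfloor>l / (2 * pi)\<rfloor>"
  have "real_of_int q \<le> l / (2 * pi)" "l / (2 * pi) < real_of_int q + 1"
    unfolding q_def by linarith+
  hence "2 * pi * real_of_int q \<le> l" "l < 2 * pi * real_of_int q + 2 * pi"
    using pi_gt_zero by (simp_all add: field_simps)
  thus "0 \<le> l - 2 * pi * real_of_int q" "l - 2 * pi * real_of_int q < 2 * pi" by linarith+
  fix t :: int
  have eq: "- (l * real_of_int t) = - ((l - 2 * pi * real_of_int q) * real_of_int t) + 2 * pi * real_of_int (- q * t)"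
    by (simp add: algebra_simps)
  have per: "cis (x + 2 * pi * real_of_int k) = cis x" for x k
    by (simp add: cis_mult[symmetric])
  show "cis (- (l * real_of_int t)) = cis (- ((l - 2 * pi * real_of_int q) * real_of_int t))"
    by (subst eq) (rule per)
qed

lemma trig_poly_coeff_tendsto:
  assumes "finite \<Lambda>" "\<Lambda> \<subseteq> {0..<2 * pi}" "0 \<le> l" "l < 2 * pi"
  shows "(\<lambda>n. window_avg (\<lambda>t. (\<Sum>\<mu>\<in>\<Lambda>. c \<mu> * cis (\<mu> * real_of_int t)) * cis (- (l * real_of_int t))) n 0)
         \<longlonglongrightarrow> (if l \<in> \<Lambda> then c l else 0)"
proof -
  have eq: "(\<Sum>\<mu>\<in>\<Lambda>. c \<mu> * cis (\<mu> * real_of_int t)) * cis (- (l * real_of_int t))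
      = (\<Sum>\<mu>\<in>\<Lambda>. c \<mu> * cis ((\<mu> - l) * real_of_int t))" for t
    by (simp add: sum_distrib_right mult.assoc cis_mult left_diff_distrib)
  have "(\<lambda>n. \<Sum>\<mu>\<in>\<Lambda>. c \<mu> * window_avg (\<lambda>t. cis ((\<mu> - l) * real_of_int t)) n 0)
      \<longlonglongrightarrow> (\<Sum>\<mu>\<in>\<Lambda>. c \<mu> * (if \<mu> - l = 0 then 1 else 0))"
  proof (intro tendsto_sum tendsto_mult tendsto_const window_avg_cis_tendsto)
    fix \<mu> assume "\<mu> \<in> \<Lambda>"
    hence "0 \<le> \<mu>" "\<mu> < 2 * pi" using assms(2) by auto
    thus "\<bar>\<mu> - l\<bar> < 2 * pi" using assms(3,4) by linarith
  qed
  also have "(\<Sum>\<mu>\<in>\<Lambda>. c \<mu> * (if \<mu> - l = 0 then 1 else 0)) = (if l \<in> \<Lambda> then c l else 0)"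
    using assms(1) by (simp add: if_distrib[of "\<lambda>x. c _ * x"] sum.If_cases cong: if_cong)
  finally show ?thesis unfolding eq window_avg_lincomb .
qed

(* An almost periodic function with finite spectrum is the trigonometric polynomial formed from
   its Fourier coefficients: the difference has all coefficients zero, hence vanishes. *)
lemma finite_spectrum_trig_poly:
  fixes f :: "int \<Rightarrow> complex"
  assumes f: "trans_precompact f" and fin: "finite (ap_spectrum f)"
  shows "f t = (\<Sum>\<mu>\<in>ap_spectrum f. ap_coeff f \<mu> * cis (\<mu> * real_of_int t))"
proof -
  define \<Lambda> where "\<Lambda> = ap_spectrum f"
  define P where "P t = (\<Sum>\<mu>\<in>\<Lambda>. ap_coeff f \<mu> * cis (\<mu> * real_of_int t))" for t
  define g where "g t = f t - P t" for t
  have \<Lambda>: "finite \<Lambda>" "\<Lambda> \<subseteq> {0..<2 * pi}" using fin unfolding \<Lambda>_def ap_spectrum_def by auto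
  have g: "trans_precompact g" unfolding g_def P_def
    by (intro trans_precompact_diff f trans_precompact_sum \<Lambda>(1) trans_precompact_mult
        trans_precompact_const trans_precompact_cis)
  have "ap_mean (\<lambda>t. g t * cis (- (l * real_of_int t))) = 0" for l
  proof -
    obtain l' where l': "0 \<le> l'" "l' < 2 * pi" "\<And>t::int. cis (- (l * real_of_int t)) = cis (- (l' * real_of_int t))"
      using cis_frequency_mod_2pi[of l] by blast
    have "trans_precompact (\<lambda>t. f t * cis ((- l') * real_of_int t))"
      by (intro trans_precompact_mult f trans_precompact_cis)
    hence "(\<lambda>n. window_avg (\<lambda>t. f t * cis (- (l' * real_of_int t))) n 0) \<longlonglongrightarrow> ap_coeff f l'"
      unfolding ap_coeff_def by (simp add: ap_mean_tendsto)
    hence "(\<lambda>n. window_avg (\<lambda>t. g t * cis (- (l' * real_of_int t))) n 0)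
        \<longlonglongrightarrow> ap_coeff f l' - (if l' \<in> \<Lambda> then ap_coeff f l' else 0)"
      unfolding g_def P_def left_diff_distrib window_avg_diff
      by (intro tendsto_diff trig_poly_coeff_tendsto \<Lambda> l'(1,2))
    also have "ap_coeff f l' - (if l' \<in> \<Lambda> then ap_coeff f l' else 0) = 0"
      using l' unfolding \<Lambda>_def ap_spectrum_def by auto
    finally show ?thesis unfolding l'(3) by (rule ap_mean_eqI)
  qed
  hence "g t = 0" by (rule zero_coeffs_imp_zero[OF g])
  thus ?thesis unfolding g_def P_def \<Lambda>_def by simp
qed

lemma ap_mean_of_real:
  assumes "trans_precompact (m :: int \<Rightarrow> real)"
  shows "ap_mean (\<lambda>t. complex_of_real (m t)) = complex_of_real (ap_mean m)"
proof (rule ap_mean_eqI)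
  have "(\<lambda>n. complex_of_real (window_avg m n 0)) \<longlonglongrightarrow> complex_of_real (ap_mean m)"
    by (intro tendsto_of_real ap_mean_tendsto assms)
  thus "(\<lambda>n. window_avg (\<lambda>t. complex_of_real (m t)) n 0) \<longlonglongrightarrow> complex_of_real (ap_mean m)"
    by (simp add: window_avg_def scaleR_conv_of_real)
qed

(* The mean of a real function with finite spectrum is the constant term of its trigonometric
   polynomial: it is the coefficient at frequency 0, which lies in [0, 2 pi). *)
lemma finite_spectrum_mean:
  fixes m :: "int \<Rightarrow> real"
  assumes m: "trans_precompact m" and fin: "finite (ap_spectrum (\<lambda>t. complex_of_real (m t)))"
  shows "complex_of_real (ap_mean m)
         = (\<Sum>\<mu>\<in>ap_spectrum (\<lambda>t. complex_of_real (m t)). ap_coeff (\<lambda>t. complex_of_real (m t)) \<mu> * (if \<mu> = 0 then 1 else 0))"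
proof -
  have "complex_of_real (ap_mean m) = ap_coeff (\<lambda>t. complex_of_real (m t)) 0"
    unfolding ap_coeff_def using ap_mean_of_real[OF m] by simp
  also have "\<dots> = (if 0 \<in> ap_spectrum (\<lambda>t. complex_of_real (m t)) then ap_coeff (\<lambda>t. complex_of_real (m t)) 0 else 0)"
    unfolding ap_spectrum_def by auto
  also have "\<dots> = (\<Sum>\<mu>\<in>ap_spectrum (\<lambda>t. complex_of_real (m t)). ap_coeff (\<lambda>t. complex_of_real (m t)) \<mu> * (if \<mu> = 0 then 1 else 0))"
    using fin by (simp add: if_distrib[of "\<lambda>x. _ * x"] sum.If_cases cong: if_cong)
  finally show ?thesis .
qed

(* In the trigonometric polynomial the
   constant term is M(m) and cancels; each other term has bounded partial sums. *)
lemma finite_spectrum_window_bound: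
  fixes m :: "int \<Rightarrow> real"
  assumes m: "trans_precompact m" and fin: "finite (ap_spectrum (\<lambda>t. complex_of_real (m t)))"
  shows "\<exists>C. \<forall>s b. \<bar>\<Sum>t\<in>{s..s + int b - 1}. m t - ap_mean m\<bar> \<le> C"
proof -
  define mc where "mc t = complex_of_real (m t)" for t
  define \<Lambda> where "\<Lambda> = ap_spectrum mc"
  define co where "co = ap_coeff mc"
  have mc: "trans_precompact mc" unfolding mc_def by (rule trans_precompact_of_real[OF m])
  have rep: "mc t = (\<Sum>\<mu>\<in>\<Lambda>. co \<mu> * cis (\<mu> * real_of_int t))" for t
    unfolding \<Lambda>_def co_def by (rule finite_spectrum_trig_poly[OF mc fin[folded mc_def]])
  have \<Lambda>: "0 \<le> \<mu> \<and> \<mu> < 2 * pi" if "\<mu> \<in> \<Lambda>" for \<mu>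
    using that unfolding \<Lambda>_def ap_spectrum_def by auto
  have mean: "complex_of_real (ap_mean m) = (\<Sum>\<mu>\<in>\<Lambda>. co \<mu> * (if \<mu> = 0 then 1 else 0))"
    unfolding \<Lambda>_def co_def mc_def by (rule finite_spectrum_mean[OF m fin])
  define C where "C = (\<Sum>\<mu>\<in>\<Lambda>. norm (co \<mu>) * (if \<mu> = 0 then 0 else 2 / norm (cis \<mu> - 1)))"
  have "\<bar>\<Sum>t\<in>{s..s + int b - 1}. m t - ap_mean m\<bar> \<le> C" for s b
  proof -
    let ?I = "{s..s + int b - 1}"
    have "complex_of_real (\<Sum>t\<in>?I. m t - ap_mean m)
        = (\<Sum>t\<in>?I. \<Sum>\<mu>\<in>\<Lambda>. co \<mu> * (cis (\<mu> * real_of_int t) - (if \<mu> = 0 then 1 else 0)))"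
      unfolding of_real_sum of_real_diff mean using rep[unfolded mc_def]
      by (simp add: right_diff_distrib sum_subtractf)
    also have "\<dots> = (\<Sum>\<mu>\<in>\<Lambda>. co \<mu> * (\<Sum>t\<in>?I. cis (\<mu> * real_of_int t) - (if \<mu> = 0 then 1 else 0)))"
      by (subst sum.swap) (simp add: sum_distrib_left)
    finally have "\<bar>\<Sum>t\<in>?I. m t - ap_mean m\<bar>
        = norm (\<Sum>\<mu>\<in>\<Lambda>. co \<mu> * (\<Sum>t\<in>?I. cis (\<mu> * real_of_int t) - (if \<mu> = 0 then 1 else 0)))"
      by (metis norm_of_real)
    also have "\<dots> \<le> (\<Sum>\<mu>\<in>\<Lambda>. norm (co \<mu> * (\<Sum>t\<in>?I. cis (\<mu> * real_of_int t) - (if \<mu> = 0 then 1 else 0))))"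
      by (rule norm_sum)
    also have "\<dots> \<le> C" unfolding C_def
    proof (rule sum_mono)
      fix \<mu> assume \<mu>: "\<mu> \<in> \<Lambda>"
      show "norm (co \<mu> * (\<Sum>t\<in>?I. cis (\<mu> * real_of_int t) - (if \<mu> = 0 then 1 else 0)))
          \<le> norm (co \<mu>) * (if \<mu> = 0 then 0 else 2 / norm (cis \<mu> - 1))"
      proof (cases "\<mu> = 0")
        case False
        hence "cis \<mu> \<noteq> 1" using \<Lambda>[OF \<mu>] by (intro cis_ne_1) auto
        hence "norm (co \<mu>) * norm (\<Sum>t\<in>?I. cis (\<mu> * real_of_int t)) \<le> norm (co \<mu>) * (2 / norm (cis \<mu> - 1))"
          by (intro mult_left_mono window_sum_cis_bound) simp_all
        thus ?thesis using False by (simp add: norm_mult)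
      qed simp
    qed
    finally show ?thesis .
  qed
  thus ?thesis by blast
qed

(* (a + c)^4 <= 8 a^4 + 8 c^4, since the difference is (a - c)^2 (7 a^2 + 10 a c + 7 c^2). *)
lemma fourth_power_sum_le: "(a + c :: real) ^ 4 \<le> 8 * a ^ 4 + 8 * c ^ 4"
proof -
  have "0 \<le> (a - c)\<^sup>2 * (7 * a\<^sup>2 + 10 * a * c + 7 * c\<^sup>2)"
  proof (rule mult_nonneg_nonneg)
    have "0 \<le> 5 * (a + c)\<^sup>2 + 2 * (a\<^sup>2 + c\<^sup>2)" by simp
    thus "0 \<le> 7 * a\<^sup>2 + 10 * a * c + 7 * c\<^sup>2" by (simp add: power2_eq_square algebra_simps)
  qed simp
  thus ?thesis by (simp add: power2_eq_square power4_eq_xxxx algebra_simps)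
qed

lemma fourth_moment_shift:
  fixes Y :: "'a \<Rightarrow> real"
  assumes "prob_space M" "Y \<in> borel_measurable M"
    and Y4: "integrable M (\<lambda>\<omega>. (Y \<omega>) ^ 4)" "integral\<^sup>L M (\<lambda>\<omega>. (Y \<omega>) ^ 4) < K"
    and d: "\<bar>d\<bar> \<le> C"
  shows "integrable M (\<lambda>\<omega>. (Y \<omega> + d) ^ 4) \<and> integral\<^sup>L M (\<lambda>\<omega>. (Y \<omega> + d) ^ 4) < 8 * K + 8 * C ^ 4"
proof -
  interpret prob_space M by (rule assms(1))
  have "d ^ 4 \<le> C ^ 4"
    using d power_mono[of "\<bar>d\<bar>" C 4] by (simp add: power_even_abs)
  hence bnd: "(Y \<omega> + d) ^ 4 \<le> 8 * (Y \<omega>) ^ 4 + 8 * C ^ 4" for \<omega>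
    using fourth_power_sum_le[of "Y \<omega>" d] by linarith
  have int8: "integrable M (\<lambda>\<omega>. 8 * (Y \<omega>) ^ 4 + 8 * C ^ 4)"
    using Y4 by simp
  have int: "integrable M (\<lambda>\<omega>. (Y \<omega> + d) ^ 4)"
  proof (rule Bochner_Integration.integrable_bound[OF int8])
    show "(\<lambda>\<omega>. (Y \<omega> + d) ^ 4) \<in> borel_measurable M" using assms(2) by measurable
    show "AE \<omega> in M. norm ((Y \<omega> + d) ^ 4) \<le> norm (8 * (Y \<omega>) ^ 4 + 8 * C ^ 4)"
      using bnd by (intro AE_I2) (simp add: zero_le_even_power)
  qed
  have "integral\<^sup>L M (\<lambda>\<omega>. (Y \<omega> + d) ^ 4) \<le> integral\<^sup>L M (\<lambda>\<omega>. 8 * (Y \<omega>) ^ 4 + 8 * C ^ 4)"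
    by (intro integral_mono int int8 bnd)
  also have "\<dots> = 8 * integral\<^sup>L M (\<lambda>\<omega>. (Y \<omega>) ^ 4) + 8 * C ^ 4"
    using Y4 by (simp add: prob_space)
  also have "\<dots> < 8 * K + 8 * C ^ 4" using Y4 by simp
  finally show ?thesis using int by simp
qed

(* One block: recentring the block sum of X t - m t at a constant mu changes it by the
   deterministic amount sum (m t - mu), which is bounded by C; so the fourth moment stays bounded. *)
lemma recentred_block_moment:
  fixes X :: "int \<Rightarrow> 'a \<Rightarrow> real" and m :: "int \<Rightarrow> real"
  assumes "prob_space M" "\<And>t. X t \<in> borel_measurable M"
    and C: "\<bar>\<Sum>t\<in>{s..s + int b - 1}. m t - \<mu>\<bar> \<le> C" and b: "1 \<le> b"
    and Y4: "integrable M (\<lambda>\<omega>. ((1 / sqrt (real b)) * (\<Sum>t\<in>{s..s + int b - 1}. X t \<omega> - m t)) ^ 4)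
         \<and> integral\<^sup>L M (\<lambda>\<omega>. ((1 / sqrt (real b)) * (\<Sum>t\<in>{s..s + int b - 1}. X t \<omega> - m t)) ^ 4) < K"
  shows "integrable M (\<lambda>\<omega>. ((1 / sqrt (real b)) * (\<Sum>t\<in>{s..s + int b - 1}. X t \<omega> - \<mu>)) ^ 4)
         \<and> integral\<^sup>L M (\<lambda>\<omega>. ((1 / sqrt (real b)) * (\<Sum>t\<in>{s..s + int b - 1}. X t \<omega> - \<mu>)) ^ 4) < 8 * K + 8 * C ^ 4"
proof -
  define Y where "Y \<omega> = (1 / sqrt (real b)) * (\<Sum>t\<in>{s..s + int b - 1}. X t \<omega> - m t)" for \<omega>
  define d where "d = (1 / sqrt (real b)) * (\<Sum>t\<in>{s..s + int b - 1}. m t - \<mu>)"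
  have sum_split: "(1 / sqrt (real b)) * (\<Sum>t\<in>{s..s + int b - 1}. X t \<omega> - \<mu>) = Y \<omega> + d" for \<omega>
    unfolding Y_def d_def by (simp add: add_divide_distrib[symmetric] sum.distrib[symmetric])
  have "\<bar>d\<bar> \<le> C"
  proof -
    have "1 \<le> sqrt (real b)" "0 \<le> C" using b C by (simp, meson abs_ge_zero order_trans)
    hence "C * 1 \<le> C * sqrt (real b)" by (intro mult_left_mono)
    hence "\<bar>\<Sum>t\<in>{s..s + int b - 1}. m t - \<mu>\<bar> \<le> C * sqrt (real b)" using C by simp
    thus ?thesis using b unfolding d_def by (simp add: abs_mult mult_imp_div_pos_le)
  qed
  moreover have "Y \<in> borel_measurable M" unfolding Y_def using assms(2) by measurable
  ultimately show ?thesis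
    unfolding sum_split using fourth_moment_shift[OF assms(1)] Y4 unfolding Y_def by blast
qed

theorem lemmaA5:
  fixes M :: "'a measure" and X :: "int \<Rightarrow> 'a \<Rightarrow> real" and K :: real
  assumes "prob_space M"
    and "\<And>t. X t \<in> borel_measurable M"
    and "WAP1 M X"
    and "finite {lam::real. 0 \<le> lam \<and> lam < 2 * pi \<and>
           ap_mean (\<lambda>t. complex_of_real (integral\<^sup>L M (X t)) * exp (- (\<i> * complex_of_real (lam * real_of_int t)))) \<noteq> 0}"
    and "\<And>n b s. 1 \<le> b \<Longrightarrow> b \<le> n \<Longrightarrow> 1 \<le> s \<Longrightarrow> s \<le> int n - int b + 1 \<Longrightarrow>
           integrable M (\<lambda>\<omega>. ((1 / sqrt (real b)) * (\<Sum>t\<in>{s..s + int b - 1}. X t \<omega> - integral\<^sup>L M (X t))) ^ 4)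
         \<and> integral\<^sup>L M (\<lambda>\<omega>. ((1 / sqrt (real b)) * (\<Sum>t\<in>{s..s + int b - 1}. X t \<omega> - integral\<^sup>L M (X t))) ^ 4) < K"
  shows "\<exists>K'::real. \<forall>n b s. 1 \<le> b \<longrightarrow> b \<le> n \<longrightarrow> 1 \<le> s \<longrightarrow> s \<le> int n - int b + 1 \<longrightarrow>
           integrable M (\<lambda>\<omega>. ((1 / sqrt (real b)) * (\<Sum>t\<in>{s..s + int b - 1}. X t \<omega> - ap_mean (\<lambda>t. integral\<^sup>L M (X t)))) ^ 4)
         \<and> integral\<^sup>L M (\<lambda>\<omega>. ((1 / sqrt (real b)) * (\<Sum>t\<in>{s..s + int b - 1}. X t \<omega> - ap_mean (\<lambda>t. integral\<^sup>L M (X t)))) ^ 4) < K'"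
proof -
  define m where "m t = integral\<^sup>L M (X t)" for t
  have m: "trans_precompact m"
    using assms(3) almost_periodic_imp_trans_precompact unfolding WAP1_def m_def by auto
  have "ap_spectrum (\<lambda>t. complex_of_real (m t)) = {lam. 0 \<le> lam \<and> lam < 2 * pi \<and>
      ap_mean (\<lambda>t. complex_of_real (integral\<^sup>L M (X t)) * exp (- (\<i> * complex_of_real (lam * real_of_int t)))) \<noteq> 0}"
    unfolding ap_spectrum_def ap_coeff_def m_def by (simp add: cis_conv_exp)
  then obtain C where C: "\<And>s b. \<bar>\<Sum>t\<in>{s..s + int b - 1}. m t - ap_mean m\<bar> \<le> C"
    using finite_spectrum_window_bound[OF m] assms(4) by auto
  show ?thesis
  proof (intro exI[of _ "8 * K + 8 * C ^ 4"] allI impI)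
    fix n b :: nat and s :: int
    assume nb: "1 \<le> b" "b \<le> n" "1 \<le> s" "s \<le> int n - int b + 1"
    show "integrable M (\<lambda>\<omega>. ((1 / sqrt (real b)) * (\<Sum>t\<in>{s..s + int b - 1}. X t \<omega> - ap_mean (\<lambda>t. integral\<^sup>L M (X t)))) ^ 4)
        \<and> integral\<^sup>L M (\<lambda>\<omega>. ((1 / sqrt (real b)) * (\<Sum>t\<in>{s..s + int b - 1}. X t \<omega> - ap_mean (\<lambda>t. integral\<^sup>L M (X t)))) ^ 4) < 8 * K + 8 * C ^ 4"
      using recentred_block_moment[where X=X, OF assms(1,2) C nb(1)] assms(5)[OF nb] unfolding m_def by blast
  qed
qed

end
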